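(* Let $\mathbb{K}\in\{\mathbb{R},\mathbb{C}\}$, let $B$ be a commutative Banach algebra over $\mathbb{K}$, $(\omega_k)_{k\in\mathbb{N}}$ a convex growth family and $(\mathcal{H},\Sigma)$ a combinatorial Hopf algebra such that $((\mathcal{H},\Sigma),(\omega_k)_k)$ is a control pair. Then the space $\ell^\infty_{\rightarrow}(\mathcal{H},B)$ of controlled linear maps is a locally convex unital topological algebra with respect to the convolution product $\phi\star\psi=m_B\circ(\phi\otimes\psi)\circ\Delta$, with unit $1_B\cdot\epsilon$.
   Context: A growth family is a family $(\omega_k)_{k\in\mathbb{N}}$ of functions $\omega_k\colon\mathbb{N}_0\to\mathbb{N}$ with (W1) $\omega_k(0)=1$, $\omega_k(n)\le\omega_{k+1}(n)$; (W2) $\omega_k(n)\omega_k(m)\le\omega_k(n+m)$; (W3) for every $k_1$ there is $k_2\ge k_1$ with $\omega_{k_2}(n)\ge2^n\omega_{k_1}(n)$ for all $n$; convex means: for each $k_1$ one can choose such $k_2$ so that additionally for every $k_3\ge k_2$ some $\alpha\in]0,1[$ satisfies $\omega_{k_1}(n)^\alpha\omega_{k_3}(n)^{1-\alpha}\le\omega_{k_2}(n)$ for all $n$. For a set $J$ graded by $|\cdot|\colon J\to\mathbb{N}_0$: $\ell^1_k(J)$ = formal sums $\sum c_\tau\tau$ with $\sum|c_\tau|\omega_k(|\tau|)<\infty$, $\ell^1_{\leftarrow}(J)=\bigcap_k\ell^1_k(J)$ (projective limit topology); $\ell^\infty_k(J,B)$ = maps $f\colon J\to B$ with $\sup_\tau\|f(\tau)\|/\omega_k(|\tau|)<\infty$,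 $\ell^\infty_{\rightarrow}(J,B)=\bigcup_k\ell^\infty_k(J,B)$ with direct limit topology. A commutative Banach algebra is unital, commutative, with complete submultiplicative norm and $\|1_B\|=1$. A combinatorial Hopf algebra $(\mathcal{H},\Sigma)$ is a graded connected Hopf algebra $\mathcal{H}$ over $\mathbb{K}$ (coproduct $\Delta$, counit $\epsilon$, antipode $S$) together with $\Sigma\subseteq\mathcal{H}$ such that $\mathcal{H}$ is as an algebra (via a fixed isomorphism) the commutative polynomial algebra $\mathbb{K}[\Sigma]$ or the noncommutative polynomial algebra $\mathbb{K}\langle\Sigma\rangle$, $\Sigma$ graded by the Hopf grading. Let $M$ be the free commutative monoid resp. free monoid on $\Sigma$ (graded by sums of degrees), so $\mathcal{H}=\mathbb{K}^{(M)}$ and $\mathcal{H}\otimes\mathcal{H}=\mathbb{K}^{(M\times M)}$ with $|(\mu,\sigma)|=|\mu|+|\sigma|$. $((\mathcal{H},\Sigma),(\omega_k))$ is a control pair if $\Delta$ and $S$ extend to continuous linear maps $\ell^1_{\leftarrow}(M)\to\ell^1_{\leftarrow}(M\times M)$ resp. $\ell^1_{\leftarrow}(M)\to\ell^1_{\leftarrow}(M)$. A linear map $\phi\colon\mathcal{H}\to B$ is controlled if $\phi|_M\in\ell^\infty_{\rightarrow}(M,B)$; the space $\ell^\infty_{\rightarrow}(\mathcal{H},B)$ of controlled linear maps is identified with $\ell^\infty_{\rightarrow}(M,B)$ as a locally convex space. *)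

theory Defs
  imports "HOL-Analysis.Analysis"
begin

definition is_R_or_C :: "'k::real_normed_field itself \<Rightarrow> bool" where
  "is_R_or_C _ \<longleftrightarrow>
     (\<forall>z::'k. \<exists>r. z = of_real r) \<or>
     (\<exists>i::'k. i * i = -1 \<and> (\<forall>z::'k. \<exists>a b. z = of_real a + of_real b * i))"

text \<open>A commutative Banach algebra over K: the type class part gives a unital commutative
  ring with complete submultiplicative norm and norm 1 = 1 (real structure); scaleK is the
  K-scalar multiplication, compatible with the real one.\<close>
definition K_banach_algebra :: "('k::real_normed_field \<Rightarrow> 'b::{banach,real_normed_algebra_1,comm_ring_1} \<Rightarrow> 'b) \<Rightarrow> bool" where
  "K_banach_algebra scaleK \<longleftrightarrow>
     (\<forall>a x y. scaleK a (x + y) = scaleK a x + scaleK a y) \<and>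
     (\<forall>a b x. scaleK (a + b) x = scaleK a x + scaleK b x) \<and>
     (\<forall>a b x. scaleK a (scaleK b x) = scaleK (a * b) x) \<and>
     (\<forall>x. scaleK 1 x = x) \<and>
     (\<forall>a x y. scaleK a (x * y) = scaleK a x * y) \<and>
     (\<forall>a x. norm (scaleK a x) = norm a * norm x) \<and>
     (\<forall>r x. scaleK (of_real r) x = scaleR r x)"

definition growth_family :: "(nat \<Rightarrow> nat \<Rightarrow> nat) \<Rightarrow> bool" where
  "growth_family \<omega> \<longleftrightarrow>
     (\<forall>k n. \<omega> k n \<ge> 1) \<and>
     (\<forall>k. \<omega> k 0 = 1) \<and> (\<forall>k n. \<omega> k n \<le> \<omega> (Suc k) n) \<and>
     (\<forall>k n m. \<omega> k n * \<omega> k m \<le> \<omega> k (n + m)) \<and>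
     (\<forall>k1. \<exists>k2\<ge>k1. \<forall>n. \<omega> k2 n \<ge> 2 ^ n * \<omega> k1 n)"

definition convex_growth_family :: "(nat \<Rightarrow> nat \<Rightarrow> nat) \<Rightarrow> bool" where
  "convex_growth_family \<omega> \<longleftrightarrow> growth_family \<omega> \<and>
     (\<forall>k1. \<exists>k2\<ge>k1. (\<forall>n. \<omega> k2 n \<ge> 2 ^ n * \<omega> k1 n) \<and>
        (\<forall>k3\<ge>k2. \<exists>\<alpha>::real. 0 < \<alpha> \<and> \<alpha> < 1 \<and>
           (\<forall>n. real (\<omega> k1 n) powr \<alpha> * real (\<omega> k3 n) powr (1 - \<alpha>) \<le> real (\<omega> k2 n))))"

text \<open>The Hopf algebra is H = K^(M), where M (a type with monoid structure) is the free
  monoid resp. free commutative monoid on the set of generators Sigma. A linear map on H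
  (resp. from H to H tensor H = K^(M x M)) is given by its values on the basis M, which are
  finitely supported coefficient functions.\<close>

definition supp :: "('a \<Rightarrow> 'c::zero) \<Rightarrow> 'a set" where
  "supp f = {x. f x \<noteq> 0}"

definition free_monoid_on :: "'m::monoid_mult set \<Rightarrow> bool" where
  "free_monoid_on \<Sigma> \<longleftrightarrow> (\<forall>\<mu>::'m. \<exists>!xs. set xs \<subseteq> \<Sigma> \<and> prod_list xs = \<mu>)"

definition free_comm_monoid_on :: "'m::monoid_mult set \<Rightarrow> bool" where
  "free_comm_monoid_on \<Sigma> \<longleftrightarrow> (\<forall>x y::'m. x * y = y * x) \<and>
     (\<forall>\<mu>::'m. (\<exists>xs. set xs \<subseteq> \<Sigma> \<and> prod_list xs = \<mu>) \<and>
        (\<forall>xs ys. set xs \<subseteq> \<Sigma> \<longrightarrow> set ys \<subseteq> \<Sigma> \<longrightarrow> prod_list xs = \<mu> \<longrightarrow> prod_list ys = \<mu>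
            \<longrightarrow> mset xs = mset ys))"

text \<open>Graded connected Hopf algebra structure on K^(M) whose algebra structure is the monoid
  algebra of M, with grading deg (a monoid homomorphism to (nat,+)), coproduct Delta,
  counit eps and antipode S, written in coordinates.\<close>
definition graded_connected_hopf ::
  "('m::monoid_mult \<Rightarrow> nat) \<Rightarrow> ('m \<Rightarrow> 'm \<times> 'm \<Rightarrow> 'k::field) \<Rightarrow> ('m \<Rightarrow> 'k) \<Rightarrow> ('m \<Rightarrow> 'm \<Rightarrow> 'k) \<Rightarrow> bool" where
  "graded_connected_hopf deg \<Delta> \<epsilon> S \<longleftrightarrow>
     \<comment> \<open>well-definedness: images of basis vectors are finitely supported\<close>
     (\<forall>\<mu>. finite (supp (\<Delta> \<mu>))) \<and> (\<forall>\<mu>. finite (supp (S \<mu>))) \<and>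
     \<comment> \<open>grading: algebra grading, connectedness, graded coproduct, counit, antipode\<close>
     deg 1 = 0 \<and> (\<forall>\<mu> \<nu>. deg (\<mu> * \<nu>) = deg \<mu> + deg \<nu>) \<and>
     (\<forall>\<mu>. deg \<mu> = 0 \<longrightarrow> \<mu> = 1) \<and>
     (\<forall>\<mu> p. \<Delta> \<mu> p \<noteq> 0 \<longrightarrow> deg (fst p) + deg (snd p) = deg \<mu>) \<and>
     (\<forall>\<mu>. \<epsilon> \<mu> \<noteq> 0 \<longrightarrow> deg \<mu> = 0) \<and>
     (\<forall>\<mu> \<nu>. S \<mu> \<nu> \<noteq> 0 \<longrightarrow> deg \<nu> = deg \<mu>) \<and>
     \<comment> \<open>coassociativity\<close>
     (\<forall>\<mu> a b c.
        (\<Sum>p\<in>supp (\<Delta> \<mu>). \<Delta> \<mu> p * (if snd p = c then \<Delta> (fst p) (a, b) else 0)) =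
        (\<Sum>p\<in>supp (\<Delta> \<mu>). \<Delta> \<mu> p * (if fst p = a then \<Delta> (snd p) (b, c) else 0))) \<and>
     \<comment> \<open>counit\<close>
     (\<forall>\<mu> \<nu>. (\<Sum>p\<in>supp (\<Delta> \<mu>). \<Delta> \<mu> p * \<epsilon> (fst p) * (if snd p = \<nu> then 1 else 0)) =
             (if \<mu> = \<nu> then 1 else 0)) \<and>
     (\<forall>\<mu> \<nu>. (\<Sum>p\<in>supp (\<Delta> \<mu>). \<Delta> \<mu> p * (if fst p = \<nu> then 1 else 0) * \<epsilon> (snd p)) =
             (if \<mu> = \<nu> then 1 else 0)) \<and>
     \<comment> \<open>coproduct and counit are algebra homomorphisms\<close>
     (\<forall>\<mu> \<nu> a b. \<Delta> (\<mu> * \<nu>) (a, b) =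
        (\<Sum>p\<in>supp (\<Delta> \<mu>). \<Sum>q\<in>supp (\<Delta> \<nu>). \<Delta> \<mu> p * \<Delta> \<nu> q *
            (if fst p * fst q = a \<and> snd p * snd q = b then 1 else 0))) \<and>
     (\<forall>p. \<Delta> 1 p = (if p = (1, 1) then 1 else 0)) \<and>
     (\<forall>\<mu> \<nu>. \<epsilon> (\<mu> * \<nu>) = \<epsilon> \<mu> * \<epsilon> \<nu>) \<and> \<epsilon> 1 = 1 \<and>
     \<comment> \<open>antipode\<close>
     (\<forall>\<mu> \<nu>. (\<Sum>p\<in>supp (\<Delta> \<mu>). \<Delta> \<mu> p *
               (\<Sum>z\<in>supp (S (fst p)). S (fst p) z * (if z * snd p = \<nu> then 1 else 0))) =
             \<epsilon> \<mu> * (if \<nu> = 1 then 1 else 0)) \<and>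
     (\<forall>\<mu> \<nu>. (\<Sum>p\<in>supp (\<Delta> \<mu>). \<Delta> \<mu> p *
               (\<Sum>z\<in>supp (S (snd p)). S (snd p) z * (if fst p * z = \<nu> then 1 else 0))) =
             \<epsilon> \<mu> * (if \<nu> = 1 then 1 else 0))"

definition combinatorial_hopf ::
  "'m::monoid_mult set \<Rightarrow> ('m \<Rightarrow> nat) \<Rightarrow> ('m \<Rightarrow> 'm \<times> 'm \<Rightarrow> 'k::field) \<Rightarrow> ('m \<Rightarrow> 'k) \<Rightarrow> ('m \<Rightarrow> 'm \<Rightarrow> 'k) \<Rightarrow> bool" where
  "combinatorial_hopf \<Sigma> deg \<Delta> \<epsilon> S \<longleftrightarrow>
     (free_monoid_on \<Sigma> \<or> free_comm_monoid_on \<Sigma>) \<and> graded_connected_hopf deg \<Delta> \<epsilon> S"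

definition in_l1 :: "(nat \<Rightarrow> nat \<Rightarrow> nat) \<Rightarrow> ('j \<Rightarrow> nat) \<Rightarrow> nat \<Rightarrow> ('j \<Rightarrow> 'k::real_normed_field) \<Rightarrow> bool" where
  "in_l1 \<omega> g k c \<longleftrightarrow> (\<lambda>\<tau>. norm (c \<tau>) * real (\<omega> k (g \<tau>))) summable_on UNIV"

definition l1_norm :: "(nat \<Rightarrow> nat \<Rightarrow> nat) \<Rightarrow> ('j \<Rightarrow> nat) \<Rightarrow> nat \<Rightarrow> ('j \<Rightarrow> 'k::real_normed_field) \<Rightarrow> real" where
  "l1_norm \<omega> g k c = (\<Sum>\<^sub>\<infinity>\<tau>. norm (c \<tau>) * real (\<omega> k (g \<tau>)))"

text \<open>The projective limit l1_<-(J) (as a set; its topology is the one given by the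
  increasing family of norms l1_norm k).\<close>
definition l1_proj :: "(nat \<Rightarrow> nat \<Rightarrow> nat) \<Rightarrow> ('j \<Rightarrow> nat) \<Rightarrow> ('j \<Rightarrow> 'k::real_normed_field) set" where
  "l1_proj \<omega> g = {c. \<forall>k. in_l1 \<omega> g k c}"

text \<open>A linear map on K^(I) (given on basis vectors by T :: 'i => ('j => 'k)) extends to a
  continuous linear map l1_<-(I) -> l1_<-(J).  Continuity of a linear map between these
  projective limits (increasing families of seminorms) is expressed by seminorm estimates.\<close>
definition extends_continuously ::
  "(nat \<Rightarrow> nat \<Rightarrow> nat) \<Rightarrow> ('i \<Rightarrow> nat) \<Rightarrow> ('j \<Rightarrow> nat) \<Rightarrow> ('i \<Rightarrow> 'j \<Rightarrow> 'k::real_normed_field) \<Rightarrow> bool" where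
  "extends_continuously \<omega> gI gJ T \<longleftrightarrow>
     (\<exists>D :: ('i \<Rightarrow> 'k) \<Rightarrow> ('j \<Rightarrow> 'k).
        (\<forall>c\<in>l1_proj \<omega> gI. D c \<in> l1_proj \<omega> gJ) \<and>
        (\<forall>c\<in>l1_proj \<omega> gI. \<forall>d\<in>l1_proj \<omega> gI. D (\<lambda>x. c x + d x) = (\<lambda>y. D c y + D d y)) \<and>
        (\<forall>a. \<forall>c\<in>l1_proj \<omega> gI. D (\<lambda>x. a * c x) = (\<lambda>y. a * D c y)) \<and>
        (\<forall>\<mu>. D (\<lambda>x. if x = \<mu> then 1 else 0) = T \<mu>) \<and>
        (\<forall>k. \<exists>k' C. \<forall>c\<in>l1_proj \<omega> gI. l1_norm \<omega> gJ k (D c) \<le> C * l1_norm \<omega> gI k' c))"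

definition control_pair ::
  "('m::monoid_mult \<Rightarrow> nat) \<Rightarrow> ('m \<Rightarrow> 'm \<times> 'm \<Rightarrow> 'k::real_normed_field) \<Rightarrow> ('m \<Rightarrow> 'm \<Rightarrow> 'k) \<Rightarrow> (nat \<Rightarrow> nat \<Rightarrow> nat) \<Rightarrow> bool" where
  "control_pair deg \<Delta> S \<omega> \<longleftrightarrow>
     extends_continuously \<omega> deg (\<lambda>p. deg (fst p) + deg (snd p)) \<Delta> \<and>
     extends_continuously \<omega> deg deg S"

text \<open>A linear map H -> B is identified with its restriction to the basis M.\<close>
definition linf :: "(nat \<Rightarrow> nat \<Rightarrow> nat) \<Rightarrow> ('j \<Rightarrow> nat) \<Rightarrow> nat \<Rightarrow> ('j \<Rightarrow> 'b::real_normed_vector) set" where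
  "linf \<omega> g k = {f. \<exists>C. \<forall>\<tau>. norm (f \<tau>) \<le> C * real (\<omega> k (g \<tau>))}"

definition linf_norm :: "(nat \<Rightarrow> nat \<Rightarrow> nat) \<Rightarrow> ('j \<Rightarrow> nat) \<Rightarrow> nat \<Rightarrow> ('j \<Rightarrow> 'b::real_normed_vector) \<Rightarrow> real" where
  "linf_norm \<omega> g k f = (SUP \<tau>. norm (f \<tau>) / real (\<omega> k (g \<tau>)))"

definition linf_ind :: "(nat \<Rightarrow> nat \<Rightarrow> nat) \<Rightarrow> ('j \<Rightarrow> nat) \<Rightarrow> ('j \<Rightarrow> 'b::real_normed_vector) set" where
  "linf_ind \<omega> g = (\<Union>k. linf \<omega> g k)"

text \<open>Continuous seminorms for the locally convex inductive limit topology: seminorms on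
  linf_ind (over K) whose restriction to every step linf k is continuous.\<close>
definition LB_seminorm ::
  "(nat \<Rightarrow> nat \<Rightarrow> nat) \<Rightarrow> ('j \<Rightarrow> nat) \<Rightarrow> ('k::real_normed_field \<Rightarrow> 'b::real_normed_vector \<Rightarrow> 'b) \<Rightarrow> (('j \<Rightarrow> 'b) \<Rightarrow> real) \<Rightarrow> bool" where
  "LB_seminorm \<omega> g scaleK q \<longleftrightarrow>
     (\<forall>f\<in>linf_ind \<omega> g. q f \<ge> 0) \<and>
     (\<forall>f\<in>linf_ind \<omega> g. \<forall>h\<in>linf_ind \<omega> g. q (\<lambda>\<tau>. f \<tau> + h \<tau>) \<le> q f + q h) \<and>
     (\<forall>a. \<forall>f\<in>linf_ind \<omega> g. q (\<lambda>\<tau>. scaleK a (f \<tau>)) = norm a * q f) \<and>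
     (\<forall>k. \<exists>C. \<forall>f\<in>linf \<omega> g k. q f \<le> C * linf_norm \<omega> g k f)"

text \<open>The locally convex inductive (direct) limit topology on linf_ind: the locally convex
  topology generated by all continuous seminorms.\<close>
definition LB_topology ::
  "(nat \<Rightarrow> nat \<Rightarrow> nat) \<Rightarrow> ('j \<Rightarrow> nat) \<Rightarrow> ('k::real_normed_field \<Rightarrow> 'b::real_normed_vector \<Rightarrow> 'b) \<Rightarrow> ('j \<Rightarrow> 'b) topology" where
  "LB_topology \<omega> g scaleK = topology (\<lambda>U. U \<subseteq> linf_ind \<omega> g \<and>
     (\<forall>f\<in>U. \<exists>q e. LB_seminorm \<omega> g scaleK q \<and> e > 0 \<and>
        {h\<in>linf_ind \<omega> g. q (\<lambda>\<tau>. h \<tau> - f \<tau>) < e} \<subseteq> U))"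

definition convolution ::
  "('m \<Rightarrow> 'm \<times> 'm \<Rightarrow> 'k) \<Rightarrow> ('k::zero \<Rightarrow> 'b::comm_ring_1 \<Rightarrow> 'b) \<Rightarrow> ('m \<Rightarrow> 'b) \<Rightarrow> ('m \<Rightarrow> 'b) \<Rightarrow> ('m \<Rightarrow> 'b)" where
  "convolution \<Delta> scaleK \<phi> \<psi> = (\<lambda>\<mu>. \<Sum>p\<in>supp (\<Delta> \<mu>). scaleK (\<Delta> \<mu> p) (\<phi> (fst p) * \<psi> (snd p)))"

definition conv_unit :: "('m \<Rightarrow> 'k) \<Rightarrow> ('k \<Rightarrow> 'b::comm_ring_1 \<Rightarrow> 'b) \<Rightarrow> ('m \<Rightarrow> 'b)" where
  "conv_unit \<epsilon> scaleK = (\<lambda>\<mu>. scaleK (\<epsilon> \<mu>) 1)"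

end

theory Submission
  imports Defs
begin

text \<open>Submultiplicativity of \<open>\<omega> k\<close> together with the l1-continuity of the coproduct, which bounds
  \<open>\<Sum>p. \<bar>\<Delta> \<mu> p\<bar> * \<omega> k (deg p)\<close> by \<open>C k * \<omega> (K k) (deg \<mu>)\<close>, shows that convolution maps the
  \<open>k\<close>-th step bilinearly and boundedly into the \<open>K k\<close>-th one; the algebra laws are the
  coassociativity and counit axioms written in coordinates. For joint continuity in the locally
  convex inductive limit topology one needs, for each continuous seminorm \<open>q\<close>, a single continuous
  seminorm \<open>p\<close> with \<open>q (\<phi> \<star> \<psi>) \<le> p \<phi> * p \<psi>\<close>. It is obtained as an infimum over finite
  decompositions of \<open>\<phi>\<close> into pieces from the steps, with step weights chosen small enough to absorb
  the constants of the stepwise bounds.\<close>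

lemma small_product_perturbation:
  fixes x0 y0 e :: real
  assumes "0 \<le> x0" "0 \<le> y0" "0 < e"
  obtains \<delta> where "0 < \<delta>"
    "\<And>x y. 0 \<le> x \<Longrightarrow> 0 \<le> y \<Longrightarrow> x < \<delta> \<Longrightarrow> y < \<delta> \<Longrightarrow> x * y0 + x0 * y + x * y < e"
proof -
  define M where "M = x0 + y0 + 1"
  define \<delta> where "\<delta> = min 1 (e / M)"
  have "0 < M"
    using assms by (simp add: M_def)
  then have "0 < \<delta>" "\<delta> \<le> 1" "\<delta> * M \<le> e"
    using \<open>0 < e\<close> by (auto simp: \<delta>_def min_def field_simps)
  moreover have "x * y0 + x0 * y + x * y < e"
    if "0 \<le> x" "0 \<le> y" "x < \<delta>" "y < \<delta>" for x y
  proof -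
    have "x * y0 \<le> \<delta> * y0" "x0 * y \<le> x0 * \<delta>"
      using that assms by (simp_all add: mult_right_mono mult_left_mono)
    moreover have "x * y \<le> x"
      using that \<open>\<delta> \<le> 1\<close> by (simp add: mult_left_le)
    ultimately have "x * y0 + x0 * y + x * y < \<delta> * M"
      using that by (simp add: M_def algebra_simps)
    with \<open>\<delta> * M \<le> e\<close> show ?thesis
      by linarith
  qed
  ultimately show thesis
    using that by blast
qed

lemma Inf_mult_bound:
  fixes S :: "real set"
  assumes "S \<noteq> {}" "\<And>v. v \<in> S \<Longrightarrow> 0 \<le> v" "0 \<le> c" "\<And>v. v \<in> S \<Longrightarrow> x \<le> c * v"
  shows "x \<le> c * Inf S"
proof (cases "c = 0")
  case True
  with assms(1,4) show ?thesis
    by fastforce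
next
  case False
  with assms(3) have "0 < c"
    by simp
  have "x / c \<le> Inf S"
    using assms(1,4) \<open>0 < c\<close> by (intro cInf_greatest) (simp_all add: divide_le_eq mult.commute)
  with \<open>0 < c\<close> show ?thesis
    by (simp add: divide_le_eq mult.commute)
qed

lemma sum_supp_times_indicator:
  fixes f :: "'a \<Rightarrow> 'c::semiring_1"
  assumes "finite (supp f)"
  shows "(\<Sum>r\<in>supp f. f r * (if r = x then 1 else 0)) = f x"
proof -
  have "(\<Sum>r\<in>supp f. f r * (if r = x then 1 else 0)) = (\<Sum>r\<in>supp f. if r = x then f x else 0)"
    by (rule sum.cong) auto
  also have "\<dots> = f x"
    using assms by (auto simp: supp_def)
  finally show ?thesis .
qed

locale banach_K_algebra =
  fixes scaleK :: "'k::real_normed_field \<Rightarrow> 'b::{banach,real_normed_algebra_1,comm_ring_1} \<Rightarrow> 'b"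
  assumes K_banach_algebra: "K_banach_algebra scaleK"
begin

sublocale module scaleK
  using K_banach_algebra by unfold_locales (auto simp: K_banach_algebra_def)

lemma scaleK_mult_left: "scaleK a (x * y) = scaleK a x * y"
  and norm_scaleK: "norm (scaleK a x) = norm a * norm x"
  using K_banach_algebra by (auto simp: K_banach_algebra_def)

lemma scaleK_mult_right: "scaleK a (x * y) = x * scaleK a y"
  using scaleK_mult_left[of a y x] by (simp add: mult.commute)

lemma scaleK_sum_list: "scaleK a (\<Sum>x\<leftarrow>xs. f x) = (\<Sum>x\<leftarrow>xs. scaleK a (f x))"
  by (induction xs) (simp_all add: scale_right_distrib)

end

section \<open>Controlled maps and the inductive limit topology\<close>

locale controlled_maps = banach_K_algebra scaleK
  for scaleK :: "'k::real_normed_field \<Rightarrow> 'b::{banach,real_normed_algebra_1,comm_ring_1} \<Rightarrow> 'b" +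
  fixes \<omega> :: "nat \<Rightarrow> nat \<Rightarrow> nat"
    and deg :: "'j \<Rightarrow> nat"
  assumes growth_family: "growth_family \<omega>"
begin

lemma weight_ge_1: "1 \<le> \<omega> k n"
  and weight_submult: "\<omega> k n * \<omega> k m \<le> \<omega> k (n + m)"
  using growth_family by (auto simp: growth_family_def)

lemma weight_pos: "0 < real (\<omega> k n)"
  using weight_ge_1[of k n] by simp

lemma weight_mono: "k \<le> k' \<Longrightarrow> \<omega> k n \<le> \<omega> k' n"
  using growth_family lift_Suc_mono_le[of "\<lambda>k. \<omega> k n"] by (auto simp: growth_family_def)

abbreviation controlled :: "('j \<Rightarrow> 'b) set"
  where "controlled \<equiv> linf_ind \<omega> deg"

abbreviation wnorm :: "nat \<Rightarrow> ('j \<Rightarrow> 'b) \<Rightarrow> real"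
  where "wnorm k f \<equiv> linf_norm \<omega> deg k f"

lemma bdd_above_linf:
  assumes "f \<in> linf \<omega> deg k"
  shows "bdd_above (range (\<lambda>\<tau>. norm (f \<tau>) / real (\<omega> k (deg \<tau>))))"
proof -
  obtain C where "\<And>\<tau>. norm (f \<tau>) \<le> C * real (\<omega> k (deg \<tau>))"
    using assms unfolding linf_def by blast
  then show ?thesis
    using weight_pos by (auto intro!: bdd_aboveI[of _ C] simp: divide_le_eq)
qed

lemma linf_norm_bound:
  assumes "f \<in> linf \<omega> deg k"
  shows "norm (f \<tau>) \<le> wnorm k f * real (\<omega> k (deg \<tau>))"
proof -
  have "norm (f \<tau>) / real (\<omega> k (deg \<tau>)) \<le> wnorm k f"
    unfolding linf_norm_def by (rule cSUP_upper[OF _ bdd_above_linf[OF assms]]) simp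
  then show ?thesis
    using weight_pos[of k "deg \<tau>"] by (simp add: divide_le_eq)
qed

lemma linf_norm_nonneg:
  assumes "f \<in> linf \<omega> deg k"
  shows "0 \<le> wnorm k f"
proof -
  have "0 \<le> wnorm k f * real (\<omega> k (deg undefined))"
    using linf_norm_bound[OF assms] norm_ge_zero order_trans by blast
  then show ?thesis
    using weight_pos[of k "deg undefined"] by (simp add: zero_le_mult_iff)
qed

lemma linf_boundI:
  assumes "\<And>\<tau>. norm (f \<tau>) \<le> C * real (\<omega> k (deg \<tau>))"
  shows "f \<in> linf \<omega> deg k \<and> wnorm k f \<le> C"
proof
  show "f \<in> linf \<omega> deg k"
    using assms unfolding linf_def by blast
  show "wnorm k f \<le> C"
    unfolding linf_norm_def
    using assms weight_pos by (intro cSUP_least) (auto simp: divide_le_eq)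
qed

lemma linf_mono:
  assumes f: "f \<in> linf \<omega> deg k" and "k \<le> k'"
  shows "f \<in> linf \<omega> deg k' \<and> wnorm k' f \<le> wnorm k f"
proof (rule linf_boundI)
  fix \<tau>
  have "norm (f \<tau>) \<le> wnorm k f * real (\<omega> k (deg \<tau>))"
    by (rule linf_norm_bound[OF f])
  also have "\<dots> \<le> wnorm k f * real (\<omega> k' (deg \<tau>))"
    using weight_mono[OF \<open>k \<le> k'\<close>] linf_norm_nonneg[OF f] by (intro mult_left_mono) auto
  finally show "norm (f \<tau>) \<le> wnorm k f * real (\<omega> k' (deg \<tau>))" .
qed

lemma linf_add:
  assumes f: "f \<in> linf \<omega> deg k" and g: "g \<in> linf \<omega> deg k"
  shows "(\<lambda>\<tau>. f \<tau> + g \<tau>) \<in> linf \<omega> deg k \<and> wnorm k (\<lambda>\<tau>. f \<tau> + g \<tau>) \<le> wnorm k f + wnorm k g"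
proof (rule linf_boundI)
  fix \<tau>
  show "norm (f \<tau> + g \<tau>) \<le> (wnorm k f + wnorm k g) * real (\<omega> k (deg \<tau>))"
    using norm_triangle_ineq[of "f \<tau>" "g \<tau>"] linf_norm_bound[OF f, of \<tau>] linf_norm_bound[OF g, of \<tau>]
    by (simp add: distrib_right)
qed

lemma linf_scaleK:
  assumes f: "f \<in> linf \<omega> deg k"
  shows "(\<lambda>\<tau>. scaleK a (f \<tau>)) \<in> linf \<omega> deg k \<and> wnorm k (\<lambda>\<tau>. scaleK a (f \<tau>)) \<le> norm a * wnorm k f"
  using linf_norm_bound[OF f] by (intro linf_boundI) (simp add: norm_scaleK mult.assoc mult_left_mono)

lemma linf_zero: "(\<lambda>\<tau>. 0::'b) \<in> linf \<omega> deg k \<and> wnorm k (\<lambda>\<tau>. 0) = 0"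
proof -
  have "(\<lambda>\<tau>. 0::'b) \<in> linf \<omega> deg k \<and> wnorm k (\<lambda>\<tau>. 0) \<le> 0"
    by (rule linf_boundI) simp
  then show ?thesis
    using linf_norm_nonneg[of "\<lambda>\<tau>. 0::'b" k] by auto
qed

lemma controlled_iff: "f \<in> controlled \<longleftrightarrow> (\<exists>k. f \<in> linf \<omega> deg k)"
  unfolding linf_ind_def by blast

lemma controlled_common_step:
  assumes "f \<in> controlled" "g \<in> controlled"
  obtains k where "f \<in> linf \<omega> deg k" "g \<in> linf \<omega> deg k"
proof -
  obtain k1 k2 where "f \<in> linf \<omega> deg k1" "g \<in> linf \<omega> deg k2"
    using assms by (auto simp: controlled_iff)
  then show thesis
    using that[of "max k1 k2"] linf_mono[of _ k1 "max k1 k2"] linf_mono[of _ k2 "max k1 k2"] by simp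
qed

lemma controlled_add: "f \<in> controlled \<Longrightarrow> g \<in> controlled \<Longrightarrow> (\<lambda>\<tau>. f \<tau> + g \<tau>) \<in> controlled"
  by (metis controlled_common_step controlled_iff linf_add)

lemma controlled_scaleK: "f \<in> controlled \<Longrightarrow> (\<lambda>\<tau>. scaleK a (f \<tau>)) \<in> controlled"
  using linf_scaleK controlled_iff by blast

lemma controlled_zero: "(\<lambda>\<tau>. 0) \<in> controlled"
  using linf_zero controlled_iff by blast

lemma controlled_diff: "f \<in> controlled \<Longrightarrow> g \<in> controlled \<Longrightarrow> (\<lambda>\<tau>. f \<tau> - g \<tau>) \<in> controlled"
  using controlled_add[OF _ controlled_scaleK[of g "-1"]] by simp

lemma controlled_sum_list:
  "(\<And>x. x \<in> set xs \<Longrightarrow> F x \<in> controlled) \<Longrightarrow> (\<lambda>\<tau>. \<Sum>x\<leftarrow>xs. F x \<tau>) \<in> controlled"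
  by (induction xs) (auto simp: controlled_zero intro: controlled_add)

lemma conv_unit_controlled:
  assumes "\<And>\<mu>. norm (\<epsilon> \<mu>) \<le> C"
  shows "conv_unit \<epsilon> scaleK \<in> controlled"
proof -
  have "norm (conv_unit \<epsilon> scaleK \<mu>) \<le> C * real (\<omega> 0 (deg \<mu>))" for \<mu>
  proof -
    have "0 \<le> C"
      using assms norm_ge_zero order_trans by blast
    then have "C \<le> C * real (\<omega> 0 (deg \<mu>))"
      using weight_ge_1 by (simp add: mult_le_cancel_left1)
    then show ?thesis
      using order_trans[OF assms[of \<mu>]] by (simp add: conv_unit_def norm_scaleK)
  qed
  then show ?thesis
    using linf_boundI controlled_iff by blast
qed

abbreviation cont_seminorm :: "(('j \<Rightarrow> 'b) \<Rightarrow> real) \<Rightarrow> bool"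
  where "cont_seminorm q \<equiv> LB_seminorm \<omega> deg scaleK q"

abbreviation LB :: "('j \<Rightarrow> 'b) topology"
  where "LB \<equiv> LB_topology \<omega> deg scaleK"

lemma LB_seminormD:
  assumes "cont_seminorm q"
  shows seminorm_nonneg: "f \<in> controlled \<Longrightarrow> 0 \<le> q f"
    and seminorm_triangle: "f \<in> controlled \<Longrightarrow> h \<in> controlled \<Longrightarrow> q (\<lambda>\<tau>. f \<tau> + h \<tau>) \<le> q f + q h"
    and seminorm_scaleK: "f \<in> controlled \<Longrightarrow> q (\<lambda>\<tau>. scaleK a (f \<tau>)) = norm a * q f"
    and seminorm_bounded_on_step: "\<exists>C. \<forall>f\<in>linf \<omega> deg k. q f \<le> C * wnorm k f"
  using assms unfolding LB_seminorm_def by blast+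

lemma seminorm_zero: "cont_seminorm q \<Longrightarrow> q (\<lambda>\<tau>. 0) = 0"
  using seminorm_scaleK[of q "\<lambda>\<tau>. 0" 0] controlled_zero by simp

lemma seminorm_nonneg_step_bound:
  assumes "cont_seminorm q"
  obtains C where "\<And>k. 0 \<le> C k" "\<And>k f. f \<in> linf \<omega> deg k \<Longrightarrow> q f \<le> C k * wnorm k f"
proof -
  obtain C where C: "\<And>k f. f \<in> linf \<omega> deg k \<Longrightarrow> q f \<le> C k * wnorm k f"
    using seminorm_bounded_on_step[OF assms] by metis
  have "C k * wnorm k f \<le> max (C k) 0 * wnorm k f" if "f \<in> linf \<omega> deg k" for k f
    using linf_norm_nonneg[OF that] by (intro mult_right_mono) auto
  with C have "q f \<le> max (C k) 0 * wnorm k f" if "f \<in> linf \<omega> deg k" for k f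
    using that order_trans by blast
  with that[of "\<lambda>k. max (C k) 0"] show thesis
    by simp
qed

lemma seminorm_sum_list:
  assumes q: "cont_seminorm q" and F: "\<And>x. x \<in> set xs \<Longrightarrow> F x \<in> controlled"
  shows "q (\<lambda>\<tau>. \<Sum>x\<leftarrow>xs. F x \<tau>) \<le> (\<Sum>x\<leftarrow>xs. q (F x))"
  using F
proof (induction xs)
  case (Cons x xs)
  have "q (\<lambda>\<tau>. F x \<tau> + (\<Sum>x\<leftarrow>xs. F x \<tau>)) \<le> q (F x) + q (\<lambda>\<tau>. \<Sum>x\<leftarrow>xs. F x \<tau>)"
    using Cons.prems by (intro seminorm_triangle[OF q] controlled_sum_list) auto
  with Cons show ?case
    by simp
qed (simp add: seminorm_zero[OF q])

lemma cont_seminorm_lincomb: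
  assumes q1: "cont_seminorm q1" and q2: "cont_seminorm q2" and "0 \<le> a" "0 \<le> b"
  shows "cont_seminorm (\<lambda>h. a * q1 h + b * q2 h)"
  unfolding LB_seminorm_def
proof (intro conjI ballI allI)
  fix f assume "f \<in> controlled"
  then show "0 \<le> a * q1 f + b * q2 f"
    using seminorm_nonneg[OF q1] seminorm_nonneg[OF q2] \<open>0 \<le> a\<close> \<open>0 \<le> b\<close> by simp
next
  fix f h assume fh: "f \<in> controlled" "h \<in> controlled"
  have "a * q1 (\<lambda>\<tau>. f \<tau> + h \<tau>) \<le> a * (q1 f + q1 h)"
    using seminorm_triangle[OF q1 fh] \<open>0 \<le> a\<close> by (rule mult_left_mono)
  moreover have "b * q2 (\<lambda>\<tau>. f \<tau> + h \<tau>) \<le> b * (q2 f + q2 h)"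
    using seminorm_triangle[OF q2 fh] \<open>0 \<le> b\<close> by (rule mult_left_mono)
  ultimately show "a * q1 (\<lambda>\<tau>. f \<tau> + h \<tau>) + b * q2 (\<lambda>\<tau>. f \<tau> + h \<tau>) \<le> a * q1 f + b * q2 f + (a * q1 h + b * q2 h)"
    by (simp add: algebra_simps)
next
  fix c f assume "f \<in> controlled"
  then show "a * q1 (\<lambda>\<tau>. scaleK c (f \<tau>)) + b * q2 (\<lambda>\<tau>. scaleK c (f \<tau>)) = norm c * (a * q1 f + b * q2 f)"
    using seminorm_scaleK[OF q1] seminorm_scaleK[OF q2] by (simp add: algebra_simps)
next
  fix k
  obtain C1 C2 where C1: "\<forall>f\<in>linf \<omega> deg k. q1 f \<le> C1 * wnorm k f"
    and C2: "\<forall>f\<in>linf \<omega> deg k. q2 f \<le> C2 * wnorm k f"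
    using seminorm_bounded_on_step[OF q1] seminorm_bounded_on_step[OF q2] by blast
  have "a * q1 f + b * q2 f \<le> (a * C1 + b * C2) * wnorm k f" if "f \<in> linf \<omega> deg k" for f
    using that C1 C2 \<open>0 \<le> a\<close> \<open>0 \<le> b\<close>
      mult_left_mono[of "q1 f" "C1 * wnorm k f" a] mult_left_mono[of "q2 f" "C2 * wnorm k f" b]
    by (simp add: algebra_simps)
  then show "\<exists>C. \<forall>f\<in>linf \<omega> deg k. a * q1 f + b * q2 f \<le> C * wnorm k f"
    by blast
qed

lemma cont_seminorm_zero: "cont_seminorm (\<lambda>h. 0)"
  unfolding LB_seminorm_def by (auto intro!: exI[of _ 0])

definition seminorm_ball :: "(('j \<Rightarrow> 'b) \<Rightarrow> real) \<Rightarrow> ('j \<Rightarrow> 'b) \<Rightarrow> real \<Rightarrow> ('j \<Rightarrow> 'b) set"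
  where "seminorm_ball q f e = {h \<in> controlled. q (\<lambda>\<tau>. h \<tau> - f \<tau>) < e}"

definition LB_open :: "('j \<Rightarrow> 'b) set \<Rightarrow> bool"
  where "LB_open U \<longleftrightarrow> U \<subseteq> controlled \<and>
    (\<forall>f\<in>U. \<exists>q e. cont_seminorm q \<and> 0 < e \<and> seminorm_ball q f e \<subseteq> U)"

lemma seminorm_ball_lincomb_subset:
  assumes q1: "cont_seminorm q1" and q2: "cont_seminorm q2" and "0 < e1" "0 < e2"
    and f: "f \<in> controlled"
  shows "seminorm_ball (\<lambda>h. (1 / e1) * q1 h + (1 / e2) * q2 h) f 1
    \<subseteq> seminorm_ball q1 f e1 \<inter> seminorm_ball q2 f e2"
proof
  fix h assume "h \<in> seminorm_ball (\<lambda>h. (1 / e1) * q1 h + (1 / e2) * q2 h) f 1"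
  then have h: "h \<in> controlled" and lt: "q1 (\<lambda>\<tau>. h \<tau> - f \<tau>) / e1 + q2 (\<lambda>\<tau>. h \<tau> - f \<tau>) / e2 < 1"
    by (auto simp: seminorm_ball_def)
  have "(\<lambda>\<tau>. h \<tau> - f \<tau>) \<in> controlled"
    using controlled_diff[OF h f] .
  then have "0 \<le> q1 (\<lambda>\<tau>. h \<tau> - f \<tau>) / e1" "0 \<le> q2 (\<lambda>\<tau>. h \<tau> - f \<tau>) / e2"
    using seminorm_nonneg[OF q1] seminorm_nonneg[OF q2] \<open>0 < e1\<close> \<open>0 < e2\<close> by auto
  then have "q1 (\<lambda>\<tau>. h \<tau> - f \<tau>) / e1 < 1" "q2 (\<lambda>\<tau>. h \<tau> - f \<tau>) / e2 < 1"
    using lt by linarith+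
  then show "h \<in> seminorm_ball q1 f e1 \<inter> seminorm_ball q2 f e2"
    using h \<open>0 < e1\<close> \<open>0 < e2\<close> by (simp add: seminorm_ball_def)
qed

lemma istopology_LB_open: "istopology LB_open"
  unfolding istopology_def
proof (intro conjI allI impI)
  fix S T assume S: "LB_open S" and T: "LB_open T"
  show "LB_open (S \<inter> T)"
    unfolding LB_open_def
  proof (intro conjI ballI)
    show "S \<inter> T \<subseteq> controlled"
      using S by (auto simp: LB_open_def)
    fix f assume f: "f \<in> S \<inter> T"
    obtain q1 e1 where q1: "cont_seminorm q1" "0 < e1" "seminorm_ball q1 f e1 \<subseteq> S"
      using S f unfolding LB_open_def by blast
    obtain q2 e2 where q2: "cont_seminorm q2" "0 < e2" "seminorm_ball q2 f e2 \<subseteq> T"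
      using T f unfolding LB_open_def by blast
    have "f \<in> controlled"
      using S f by (auto simp: LB_open_def)
    define q where "q = (\<lambda>h. (1 / e1) * q1 h + (1 / e2) * q2 h)"
    have "cont_seminorm q"
      unfolding q_def using q1 q2 by (intro cont_seminorm_lincomb) auto
    moreover have "seminorm_ball q f 1 \<subseteq> S \<inter> T"
      using seminorm_ball_lincomb_subset[OF q1(1) q2(1) q1(2) q2(2) \<open>f \<in> controlled\<close>] q1(3) q2(3)
      unfolding q_def by blast
    ultimately show "\<exists>q e. cont_seminorm q \<and> 0 < e \<and> seminorm_ball q f e \<subseteq> S \<inter> T"
      by (intro exI[of _ q] exI[of _ 1]) auto
  qed
next
  fix \<U> assume \<U>: "\<forall>U\<in>\<U>. LB_open U"
  show "LB_open (\<Union>\<U>)"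
    unfolding LB_open_def
  proof (intro conjI ballI)
    show "\<Union>\<U> \<subseteq> controlled"
      using \<U> by (auto simp: LB_open_def)
    fix f assume "f \<in> \<Union>\<U>"
    then obtain U where U: "U \<in> \<U>" "f \<in> U"
      by blast
    then obtain q e where "cont_seminorm q" "0 < e" "seminorm_ball q f e \<subseteq> U"
      using \<U> unfolding LB_open_def by meson
    with U show "\<exists>q e. cont_seminorm q \<and> 0 < e \<and> seminorm_ball q f e \<subseteq> \<Union>\<U>"
      by blast
  qed
qed

lemma openin_LB: "openin LB U \<longleftrightarrow> LB_open U"
proof -
  have "LB = topology LB_open"
    unfolding LB_topology_def LB_open_def seminorm_ball_def ..
  then show ?thesis
    using istopology_LB_open by simp
qed

lemma topspace_LB: "topspace LB = controlled"
proof -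
  have "LB_open controlled"
    unfolding LB_open_def seminorm_ball_def using cont_seminorm_zero
    by (intro conjI ballI exI[of _ "\<lambda>h. 0"] exI[of _ 1]) auto
  then show ?thesis
    unfolding topspace_def openin_LB by (auto simp: LB_open_def)
qed

lemma center_in_seminorm_ball: "cont_seminorm q \<Longrightarrow> f \<in> controlled \<Longrightarrow> 0 < e \<Longrightarrow> f \<in> seminorm_ball q f e"
  by (simp add: seminorm_ball_def seminorm_zero)

lemma openin_seminorm_ball:
  assumes q: "cont_seminorm q" and f: "f \<in> controlled"
  shows "openin LB (seminorm_ball q f e)"
  unfolding openin_LB LB_open_def
proof (intro conjI ballI)
  fix g assume g: "g \<in> seminorm_ball q f e"
  have "seminorm_ball q g (e - q (\<lambda>\<tau>. g \<tau> - f \<tau>)) \<subseteq> seminorm_ball q f e"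
  proof
    fix h assume h: "h \<in> seminorm_ball q g (e - q (\<lambda>\<tau>. g \<tau> - f \<tau>))"
    have "q (\<lambda>\<tau>. (h \<tau> - g \<tau>) + (g \<tau> - f \<tau>)) \<le> q (\<lambda>\<tau>. h \<tau> - g \<tau>) + q (\<lambda>\<tau>. g \<tau> - f \<tau>)"
      using g h f by (intro seminorm_triangle[OF q] controlled_diff) (auto simp: seminorm_ball_def)
    with h show "h \<in> seminorm_ball q f e"
      by (simp add: seminorm_ball_def)
  qed
  moreover have "0 < e - q (\<lambda>\<tau>. g \<tau> - f \<tau>)"
    using g by (simp add: seminorm_ball_def)
  ultimately show "\<exists>q' e'. cont_seminorm q' \<and> 0 < e' \<and> seminorm_ball q' g e' \<subseteq> seminorm_ball q f e"
    using q by blast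
qed (auto simp: seminorm_ball_def)

lemma continuous_map_LBI:
  assumes into: "\<And>x. x \<in> topspace X \<Longrightarrow> F x \<in> controlled"
    and near: "\<And>x q e. x \<in> topspace X \<Longrightarrow> cont_seminorm q \<Longrightarrow> 0 < e \<Longrightarrow>
      \<exists>V. openin X V \<and> x \<in> V \<and> (\<forall>y\<in>V. q (\<lambda>\<tau>. F y \<tau> - F x \<tau>) < e)"
  shows "continuous_map X LB F"
  unfolding continuous_map topspace_LB
proof (intro conjI allI impI)
  show "F ` topspace X \<subseteq> controlled"
    using into by auto
  fix U assume "openin LB U"
  then have U: "LB_open U"
    by (simp add: openin_LB)
  show "openin X {x \<in> topspace X. F x \<in> U}"
  proof (subst openin_subopen, intro ballI)
    fix x assume x: "x \<in> {x \<in> topspace X. F x \<in> U}"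
    then obtain q e where qe: "cont_seminorm q" "0 < e" "seminorm_ball q (F x) e \<subseteq> U"
      using U unfolding LB_open_def by blast
    obtain V where V: "openin X V" "x \<in> V" "\<forall>y\<in>V. q (\<lambda>\<tau>. F y \<tau> - F x \<tau>) < e"
      using near[of x q e] x qe by blast
    have "V \<subseteq> {x \<in> topspace X. F x \<in> U}"
      using V qe into openin_subset[OF V(1)] by (auto simp: seminorm_ball_def)
    then show "\<exists>T. openin X T \<and> x \<in> T \<and> T \<subseteq> {x \<in> topspace X. F x \<in> U}"
      using V by blast
  qed
qed

lemma continuous_map_LB_add: "continuous_map (prod_topology LB LB) LB (\<lambda>(\<phi>, \<psi>). (\<lambda>\<mu>. \<phi> \<mu> + \<psi> \<mu>))"
proof (rule continuous_map_LBI)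
  fix x assume "x \<in> topspace (prod_topology LB LB)"
  then obtain \<phi>0 \<psi>0 where x: "x = (\<phi>0, \<psi>0)" "\<phi>0 \<in> controlled" "\<psi>0 \<in> controlled"
    by (auto simp: topspace_LB)
  then show "(case x of (\<phi>, \<psi>) \<Rightarrow> \<lambda>\<mu>. \<phi> \<mu> + \<psi> \<mu>) \<in> controlled"
    using controlled_add by simp
  fix q and e :: real assume q: "cont_seminorm q" and "0 < e"
  let ?V = "seminorm_ball q \<phi>0 (e / 2) \<times> seminorm_ball q \<psi>0 (e / 2)"
  have "q (\<lambda>\<tau>. (\<phi> \<tau> + \<psi> \<tau>) - (\<phi>0 \<tau> + \<psi>0 \<tau>)) < e" if "(\<phi>, \<psi>) \<in> ?V" for \<phi> \<psi>
  proof -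
    have "q (\<lambda>\<tau>. (\<phi> \<tau> - \<phi>0 \<tau>) + (\<psi> \<tau> - \<psi>0 \<tau>)) \<le> q (\<lambda>\<tau>. \<phi> \<tau> - \<phi>0 \<tau>) + q (\<lambda>\<tau>. \<psi> \<tau> - \<psi>0 \<tau>)"
      using that x by (intro seminorm_triangle[OF q] controlled_diff) (auto simp: seminorm_ball_def)
    with that show ?thesis
      by (simp add: seminorm_ball_def algebra_simps)
  qed
  moreover have "openin (prod_topology LB LB) ?V"
    using openin_seminorm_ball[OF q] x by (simp add: openin_prod_Times_iff)
  moreover have "x \<in> ?V"
    using center_in_seminorm_ball[OF q] x \<open>0 < e\<close> by simp
  ultimately show "\<exists>V. openin (prod_topology LB LB) V \<and> x \<in> V \<and>
      (\<forall>y\<in>V. q (\<lambda>\<tau>. (case y of (\<phi>, \<psi>) \<Rightarrow> \<lambda>\<mu>. \<phi> \<mu> + \<psi> \<mu>) \<tau> - (case x of (\<phi>, \<psi>) \<Rightarrow> \<lambda>\<mu>. \<phi> \<mu> + \<psi> \<mu>) \<tau>) < e)"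
    using x by (intro exI[of _ ?V]) auto
qed


lemma seminorm_triangle3:
  assumes "cont_seminorm q" "f \<in> controlled" "g \<in> controlled" "h \<in> controlled"
  shows "q (\<lambda>\<tau>. f \<tau> + (g \<tau> + h \<tau>)) \<le> q f + q g + q h"
  using seminorm_triangle[OF assms(1,2) controlled_add[OF assms(3,4)]]
    seminorm_triangle[OF assms(1,3,4)]
  by simp

lemma continuous_map_LB_scaleK:
  "continuous_map (prod_topology (euclidean :: 'k topology) LB) LB (\<lambda>(a, \<phi>). (\<lambda>\<mu>. scaleK a (\<phi> \<mu>)))"
proof (rule continuous_map_LBI)
  fix x assume "x \<in> topspace (prod_topology (euclidean :: 'k topology) LB)"
  then obtain a0 \<phi>0 where x: "x = (a0, \<phi>0)" "\<phi>0 \<in> controlled"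
    by (auto simp: topspace_LB)
  then show "(case x of (a, \<phi>) \<Rightarrow> \<lambda>\<mu>. scaleK a (\<phi> \<mu>)) \<in> controlled"
    using controlled_scaleK by simp
  fix q and e :: real assume q: "cont_seminorm q" and "0 < e"
  obtain \<delta> where "0 < \<delta>" and \<delta>: "\<And>x y. 0 \<le> x \<Longrightarrow> 0 \<le> y \<Longrightarrow> x < \<delta> \<Longrightarrow> y < \<delta> \<Longrightarrow>
      x * q \<phi>0 + norm a0 * y + x * y < e"
    using small_product_perturbation[of "norm a0" "q \<phi>0" e] seminorm_nonneg[OF q x(2)] \<open>0 < e\<close>
    by auto
  let ?V = "ball a0 \<delta> \<times> seminorm_ball q \<phi>0 \<delta>"
  have "q (\<lambda>\<tau>. scaleK a (\<phi> \<tau>) - scaleK a0 (\<phi>0 \<tau>)) < e" if "(a, \<phi>) \<in> ?V" for a \<phi>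
  proof -
    define d where "d = (\<lambda>\<tau>. \<phi> \<tau> - \<phi>0 \<tau>)"
    have d: "d \<in> controlled" "q d < \<delta>" and a: "norm (a - a0) < \<delta>"
      using that x(2) controlled_diff
      by (auto simp: d_def seminorm_ball_def dist_norm norm_minus_commute)
    have "(\<lambda>\<tau>. scaleK a (\<phi> \<tau>) - scaleK a0 (\<phi>0 \<tau>)) =
        (\<lambda>\<tau>. scaleK (a - a0) (\<phi>0 \<tau>) + (scaleK a0 (d \<tau>) + scaleK (a - a0) (d \<tau>)))"
      by (simp add: d_def algebra_simps)
    then have "q (\<lambda>\<tau>. scaleK a (\<phi> \<tau>) - scaleK a0 (\<phi>0 \<tau>)) \<le>
        q (\<lambda>\<tau>. scaleK (a - a0) (\<phi>0 \<tau>)) + q (\<lambda>\<tau>. scaleK a0 (d \<tau>)) + q (\<lambda>\<tau>. scaleK (a - a0) (d \<tau>))"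
      using seminorm_triangle3[OF q] controlled_scaleK x(2) d(1) by simp
    also have "\<dots> = norm (a - a0) * q \<phi>0 + norm a0 * q d + norm (a - a0) * q d"
      using seminorm_scaleK[OF q] x(2) d(1) by simp
    also have "\<dots> < e"
      using \<delta> d a seminorm_nonneg[OF q d(1)] by simp
    finally show ?thesis .
  qed
  moreover have "openin (prod_topology euclidean LB) ?V"
    using openin_seminorm_ball[OF q x(2)] by (simp add: openin_prod_Times_iff)
  moreover have "x \<in> ?V"
    using center_in_seminorm_ball[OF q x(2) \<open>0 < \<delta>\<close>] x \<open>0 < \<delta>\<close> by simp
  ultimately show "\<exists>V. openin (prod_topology euclidean LB) V \<and> x \<in> V \<and>
      (\<forall>y\<in>V. q (\<lambda>\<tau>. (case y of (a, \<phi>) \<Rightarrow> \<lambda>\<mu>. scaleK a (\<phi> \<mu>)) \<tau> - (case x of (a, \<phi>) \<Rightarrow> \<lambda>\<mu>. scaleK a (\<phi> \<mu>)) \<tau>) < e)"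
    using x by (intro exI[of _ ?V]) auto
qed

text \<open>A decomposition of \<open>\<phi>\<close> is a finite list of pieces \<open>(k, \<Phi>)\<close> with \<open>\<Phi>\<close> in the step
  \<open>linf \<omega> deg k\<close> and sum \<open>\<phi>\<close>; the infimum of the costs \<open>\<Sum> wnorm k \<Phi> / r k\<close> is the
  usual description of the continuous seminorms of an LB-space.\<close>

definition decomp_costs :: "(nat \<Rightarrow> real) \<Rightarrow> ('j \<Rightarrow> 'b) \<Rightarrow> real set"
  where "decomp_costs r \<phi> = {(\<Sum>d\<leftarrow>ds. wnorm (fst d) (snd d) / r (fst d)) | ds.
    (\<forall>d\<in>set ds. snd d \<in> linf \<omega> deg (fst d)) \<and> \<phi> = (\<lambda>\<tau>. \<Sum>d\<leftarrow>ds. snd d \<tau>)}"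

definition decomp_seminorm :: "(nat \<Rightarrow> real) \<Rightarrow> ('j \<Rightarrow> 'b) \<Rightarrow> real"
  where "decomp_seminorm r \<phi> = Inf (decomp_costs r \<phi>)"

context
  fixes r :: "nat \<Rightarrow> real"
  assumes r_pos: "\<And>k. 0 < r k"
begin

lemma decomp_costs_nonneg:
  assumes "v \<in> decomp_costs r \<phi>"
  shows "0 \<le> v"
proof -
  obtain ds where "v = (\<Sum>d\<leftarrow>ds. wnorm (fst d) (snd d) / r (fst d))"
    "\<forall>d\<in>set ds. snd d \<in> linf \<omega> deg (fst d)"
    using assms unfolding decomp_costs_def by blast
  then show ?thesis
    using r_pos by (force intro!: sum_list_nonneg divide_nonneg_pos linf_norm_nonneg)
qed

lemma decomp_costs_single: "\<phi> \<in> linf \<omega> deg k \<Longrightarrow> wnorm k \<phi> / r k \<in> decomp_costs r \<phi>"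
  unfolding decomp_costs_def by (intro CollectI exI[of _ "[(k, \<phi>)]"]) simp

lemma decomp_costs_add:
  assumes "v1 \<in> decomp_costs r f" "v2 \<in> decomp_costs r h"
  shows "v1 + v2 \<in> decomp_costs r (\<lambda>\<tau>. f \<tau> + h \<tau>)"
proof -
  obtain ds1 where ds1: "v1 = (\<Sum>d\<leftarrow>ds1. wnorm (fst d) (snd d) / r (fst d))"
    "\<forall>d\<in>set ds1. snd d \<in> linf \<omega> deg (fst d)" "f = (\<lambda>\<tau>. \<Sum>d\<leftarrow>ds1. snd d \<tau>)"
    using assms(1) unfolding decomp_costs_def by blast
  obtain ds2 where ds2: "v2 = (\<Sum>d\<leftarrow>ds2. wnorm (fst d) (snd d) / r (fst d))"
    "\<forall>d\<in>set ds2. snd d \<in> linf \<omega> deg (fst d)" "h = (\<lambda>\<tau>. \<Sum>d\<leftarrow>ds2. snd d \<tau>)"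
    using assms(2) unfolding decomp_costs_def by blast
  show ?thesis
    unfolding decomp_costs_def using ds1 ds2 by (intro CollectI exI[of _ "ds1 @ ds2"]) auto
qed

lemma decomp_costs_scaleK:
  assumes "v \<in> decomp_costs r f"
  shows "\<exists>v'\<in>decomp_costs r (\<lambda>\<tau>. scaleK a (f \<tau>)). v' \<le> norm a * v"
proof -
  obtain ds where ds: "v = (\<Sum>d\<leftarrow>ds. wnorm (fst d) (snd d) / r (fst d))"
    "\<forall>d\<in>set ds. snd d \<in> linf \<omega> deg (fst d)" "f = (\<lambda>\<tau>. \<Sum>d\<leftarrow>ds. snd d \<tau>)"
    using assms unfolding decomp_costs_def by blast
  define ds' where "ds' = map (\<lambda>d. (fst d, \<lambda>\<tau>. scaleK a (snd d \<tau>))) ds"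
  have "(\<Sum>d\<leftarrow>ds'. wnorm (fst d) (snd d) / r (fst d)) \<in> decomp_costs r (\<lambda>\<tau>. scaleK a (f \<tau>))"
    unfolding decomp_costs_def
  proof (intro CollectI exI[of _ ds'] conjI)
    show "\<forall>d\<in>set ds'. snd d \<in> linf \<omega> deg (fst d)"
      using ds(2) linf_scaleK by (auto simp: ds'_def)
    show "(\<lambda>\<tau>. scaleK a (f \<tau>)) = (\<lambda>\<tau>. \<Sum>d\<leftarrow>ds'. snd d \<tau>)"
      by (simp add: ds'_def ds(3) scaleK_sum_list o_def)
  qed simp
  moreover have "(\<Sum>d\<leftarrow>ds'. wnorm (fst d) (snd d) / r (fst d)) \<le> norm a * v"
  proof -
    have "(\<Sum>d\<leftarrow>ds'. wnorm (fst d) (snd d) / r (fst d)) \<le> (\<Sum>d\<leftarrow>ds. norm a * (wnorm (fst d) (snd d) / r (fst d)))"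
      unfolding ds'_def using ds(2) linf_scaleK less_imp_le[OF r_pos]
      by (auto simp: o_def intro!: sum_list_mono divide_right_mono)
    then show ?thesis
      by (simp only: ds(1) sum_list_const_mult)
  qed
  ultimately show ?thesis
    by blast
qed

lemma decomp_costs_nonempty: "\<phi> \<in> controlled \<Longrightarrow> decomp_costs r \<phi> \<noteq> {}"
  using decomp_costs_single controlled_iff by blast

lemma decomp_seminorm_le: "v \<in> decomp_costs r \<phi> \<Longrightarrow> decomp_seminorm r \<phi> \<le> v"
  unfolding decomp_seminorm_def by (rule cInf_lower) (auto intro: bdd_belowI[of _ 0] decomp_costs_nonneg)

lemma decomp_seminorm_nonneg: "\<phi> \<in> controlled \<Longrightarrow> 0 \<le> decomp_seminorm r \<phi>"
  unfolding decomp_seminorm_def by (rule cInf_greatest[OF decomp_costs_nonempty]) (auto intro: decomp_costs_nonneg)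

lemma decomp_seminorm_greatest:
  "\<phi> \<in> controlled \<Longrightarrow> 0 \<le> c \<Longrightarrow> (\<And>v. v \<in> decomp_costs r \<phi> \<Longrightarrow> x \<le> c * v) \<Longrightarrow> x \<le> c * decomp_seminorm r \<phi>"
  unfolding decomp_seminorm_def by (rule Inf_mult_bound[OF decomp_costs_nonempty]) (auto intro: decomp_costs_nonneg)

lemma decomp_seminorm_scaleK_le:
  assumes "f \<in> controlled"
  shows "decomp_seminorm r (\<lambda>\<tau>. scaleK a (f \<tau>)) \<le> norm a * decomp_seminorm r f"
proof (rule decomp_seminorm_greatest[OF assms norm_ge_zero])
  fix v assume "v \<in> decomp_costs r f"
  then obtain v' where "v' \<in> decomp_costs r (\<lambda>\<tau>. scaleK a (f \<tau>))" "v' \<le> norm a * v"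
    using decomp_costs_scaleK by blast
  then show "decomp_seminorm r (\<lambda>\<tau>. scaleK a (f \<tau>)) \<le> norm a * v"
    using decomp_seminorm_le by fastforce
qed

lemma decomp_seminorm_triangle:
  assumes f: "f \<in> controlled" and h: "h \<in> controlled"
  shows "decomp_seminorm r (\<lambda>\<tau>. f \<tau> + h \<tau>) \<le> decomp_seminorm r f + decomp_seminorm r h"
proof -
  have "decomp_seminorm r (\<lambda>\<tau>. f \<tau> + h \<tau>) - v2 \<le> 1 * decomp_seminorm r f"
    if v2: "v2 \<in> decomp_costs r h" for v2
    using decomp_costs_add[OF _ v2] decomp_seminorm_le
    by (intro decomp_seminorm_greatest[OF f]) fastforce+
  then have "decomp_seminorm r (\<lambda>\<tau>. f \<tau> + h \<tau>) - decomp_seminorm r f \<le> 1 * decomp_seminorm r h"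
    by (intro decomp_seminorm_greatest[OF h]) (auto simp: algebra_simps)
  then show ?thesis
    by simp
qed

lemma decomp_seminorm_scaleK:
  assumes f: "f \<in> controlled"
  shows "decomp_seminorm r (\<lambda>\<tau>. scaleK a (f \<tau>)) = norm a * decomp_seminorm r f"
proof (cases "a = 0")
  case True
  then show ?thesis
    using decomp_seminorm_scaleK_le[OF f, of a] decomp_seminorm_nonneg[OF controlled_scaleK[OF f, of a]]
    by simp
next
  case False
  have "decomp_seminorm r f = decomp_seminorm r (\<lambda>\<tau>. scaleK (inverse a) (scaleK a (f \<tau>)))"
    using False by simp
  also have "\<dots> \<le> norm (inverse a) * decomp_seminorm r (\<lambda>\<tau>. scaleK a (f \<tau>))"
    by (rule decomp_seminorm_scaleK_le[OF controlled_scaleK[OF f]])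
  finally have "norm a * decomp_seminorm r f \<le> norm a * (norm (inverse a) * decomp_seminorm r (\<lambda>\<tau>. scaleK a (f \<tau>)))"
    by (rule mult_left_mono) simp
  also have "\<dots> = decomp_seminorm r (\<lambda>\<tau>. scaleK a (f \<tau>))"
    using False by (simp add: norm_inverse)
  finally have "norm a * decomp_seminorm r f \<le> decomp_seminorm r (\<lambda>\<tau>. scaleK a (f \<tau>))" .
  with decomp_seminorm_scaleK_le[OF f, of a] show ?thesis
    by linarith
qed

lemma cont_seminorm_decomp_seminorm: "cont_seminorm (decomp_seminorm r)"
  unfolding LB_seminorm_def
proof (intro conjI ballI allI)
  fix k
  have "decomp_seminorm r f \<le> (1 / r k) * wnorm k f" if "f \<in> linf \<omega> deg k" for f
    using decomp_seminorm_le[OF decomp_costs_single[OF that]] by simp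
  then show "\<exists>C. \<forall>f\<in>linf \<omega> deg k. decomp_seminorm r f \<le> C * wnorm k f"
    by blast
qed (simp_all add: decomp_seminorm_nonneg decomp_seminorm_triangle decomp_seminorm_scaleK)

end

end

section \<open>Hopf algebras with continuous coproduct\<close>

lemma l1_finite_supp:
  fixes c :: "'j \<Rightarrow> 'k::real_normed_field"
  assumes "finite (supp c)"
  shows "in_l1 \<omega> g k c \<and> l1_norm \<omega> g k c = (\<Sum>\<tau>\<in>supp c. norm (c \<tau>) * real (\<omega> k (g \<tau>)))"
proof -
  define F where "F \<tau> = norm (c \<tau>) * real (\<omega> k (g \<tau>))" for \<tau>
  have "F x = 0" if "x \<notin> supp c" for x
    using that by (simp add: F_def supp_def)
  then have "(F has_sum sum F (supp c)) UNIV"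
    using has_sum_cong_neutral[where S = UNIV and T = "supp c" and f = F and g = F] assms by auto
  then show ?thesis
    unfolding in_l1_def l1_norm_def F_def[symmetric] by (auto simp: summable_on_def infsumI)
qed

lemma l1_indicator:
  "(\<lambda>x. if x = \<mu> then 1 else (0::'k::real_normed_field)) \<in> l1_proj \<omega> g \<and>
    l1_norm \<omega> g k (\<lambda>x. if x = \<mu> then 1 else (0::'k)) = real (\<omega> k (g \<mu>))"
proof -
  have "supp (\<lambda>x. if x = \<mu> then 1 else (0::'k)) = {\<mu>}"
    by (auto simp: supp_def)
  then show ?thesis
    using l1_finite_supp[of "\<lambda>x. if x = \<mu> then 1 else (0::'k)" \<omega> g] by (simp add: l1_proj_def)
qed

lemma extends_continuously_basis_bound:
  fixes T :: "'i \<Rightarrow> 'j \<Rightarrow> 'k::real_normed_field"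
  assumes "extends_continuously \<omega> gI gJ T" and fin: "\<And>\<mu>. finite (supp (T \<mu>))"
  obtains K C where "\<And>k. 0 \<le> C k"
    "\<And>k \<mu>. (\<Sum>\<nu>\<in>supp (T \<mu>). norm (T \<mu> \<nu>) * real (\<omega> k (gJ \<nu>))) \<le> C k * real (\<omega> (K k) (gI \<mu>))"
proof -
  obtain D :: "('i \<Rightarrow> 'k) \<Rightarrow> ('j \<Rightarrow> 'k)" where
    D: "\<And>\<mu>. D (\<lambda>x. if x = \<mu> then 1 else 0) = T \<mu>"
    and cont: "\<forall>k. \<exists>k' C. \<forall>c\<in>l1_proj \<omega> gI. l1_norm \<omega> gJ k (D c) \<le> C * l1_norm \<omega> gI k' c"
    using assms(1) unfolding extends_continuously_def by blast
  obtain K C where DC: "\<And>k c. c \<in> l1_proj \<omega> gI \<Longrightarrow> l1_norm \<omega> gJ k (D c) \<le> C k * l1_norm \<omega> gI (K k) c"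
    using cont by metis
  have "(\<Sum>\<nu>\<in>supp (T \<mu>). norm (T \<mu> \<nu>) * real (\<omega> k (gJ \<nu>))) \<le> max (C k) 0 * real (\<omega> (K k) (gI \<mu>))" for k \<mu>
  proof -
    have "(\<Sum>\<nu>\<in>supp (T \<mu>). norm (T \<mu> \<nu>) * real (\<omega> k (gJ \<nu>))) = l1_norm \<omega> gJ k (T \<mu>)"
      using l1_finite_supp[OF fin] by simp
    also have "\<dots> \<le> C k * real (\<omega> (K k) (gI \<mu>))"
      using DC[of "\<lambda>x. if x = \<mu> then 1 else 0" k] l1_indicator[where 'k = 'k, of \<mu> \<omega> gI "K k"] D by simp
    also have "\<dots> \<le> max (C k) 0 * real (\<omega> (K k) (gI \<mu>))"
      by (intro mult_right_mono) auto
    finally show ?thesis .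
  qed
  then show thesis
    using that[of "\<lambda>k. max (C k) 0" K] by simp
qed

lemma graded_connected_hopfD:
  assumes "graded_connected_hopf deg \<Delta> \<epsilon> S"
  shows hopf_finite_supp: "finite (supp (\<Delta> \<mu>))"
    and hopf_coassoc: "(\<Sum>p\<in>supp (\<Delta> \<mu>). \<Delta> \<mu> p * (if snd p = c then \<Delta> (fst p) (a, b) else 0)) =
      (\<Sum>p\<in>supp (\<Delta> \<mu>). \<Delta> \<mu> p * (if fst p = a then \<Delta> (snd p) (b, c) else 0))"
    and hopf_counit_left: "(\<Sum>p\<in>supp (\<Delta> \<mu>). \<Delta> \<mu> p * \<epsilon> (fst p) * (if snd p = \<nu> then 1 else 0)) =
      (if \<mu> = \<nu> then 1 else 0)"
    and hopf_counit_right: "(\<Sum>p\<in>supp (\<Delta> \<mu>). \<Delta> \<mu> p * (if fst p = \<nu> then 1 else 0) * \<epsilon> (snd p)) =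
      (if \<mu> = \<nu> then 1 else 0)"
    and hopf_counit_support: "\<epsilon> \<mu> \<noteq> 0 \<Longrightarrow> \<mu> = 1"
    and hopf_counit_one: "\<epsilon> 1 = 1"
proof -
  note H = assms[unfolded graded_connected_hopf_def]
  show "finite (supp (\<Delta> \<mu>))"
    using H by simp
  show "(\<Sum>p\<in>supp (\<Delta> \<mu>). \<Delta> \<mu> p * (if snd p = c then \<Delta> (fst p) (a, b) else 0)) =
      (\<Sum>p\<in>supp (\<Delta> \<mu>). \<Delta> \<mu> p * (if fst p = a then \<Delta> (snd p) (b, c) else 0))"
    using H by simp
  show "(\<Sum>p\<in>supp (\<Delta> \<mu>). \<Delta> \<mu> p * \<epsilon> (fst p) * (if snd p = \<nu> then 1 else 0)) =
      (if \<mu> = \<nu> then 1 else 0)"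
    using H by simp
  show "(\<Sum>p\<in>supp (\<Delta> \<mu>). \<Delta> \<mu> p * (if fst p = \<nu> then 1 else 0) * \<epsilon> (snd p)) =
      (if \<mu> = \<nu> then 1 else 0)"
    using H by simp
  have "\<forall>\<mu>. \<epsilon> \<mu> \<noteq> 0 \<longrightarrow> deg \<mu> = 0"
    using H by (elim conjE) assumption
  moreover have "\<forall>\<mu>. deg \<mu> = 0 \<longrightarrow> \<mu> = 1"
    using H by (elim conjE) assumption
  ultimately show "\<mu> = 1" if "\<epsilon> \<mu> \<noteq> 0"
    using that by blast
  show "\<epsilon> 1 = 1"
    using H by simp
qed

section \<open>The convolution algebra\<close>

locale hopf_convolution = banach_K_algebra scaleK
  for scaleK :: "'k::real_normed_field \<Rightarrow> 'b::{banach,real_normed_algebra_1,comm_ring_1} \<Rightarrow> 'b" +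
  fixes \<Delta> :: "'m \<Rightarrow> 'm \<times> 'm \<Rightarrow> 'k"
  assumes finite_supp_coproduct: "finite (supp (\<Delta> \<mu>))"
begin

abbreviation conv :: "('m \<Rightarrow> 'b) \<Rightarrow> ('m \<Rightarrow> 'b) \<Rightarrow> 'm \<Rightarrow> 'b"
  where "conv \<equiv> convolution \<Delta> scaleK"

lemma conv_add_left: "conv (\<lambda>\<tau>. f \<tau> + g \<tau>) h = (\<lambda>\<mu>. conv f h \<mu> + conv g h \<mu>)"
  unfolding convolution_def by (simp add: distrib_right scale_right_distrib sum.distrib)

lemma conv_add_right: "conv h (\<lambda>\<tau>. f \<tau> + g \<tau>) = (\<lambda>\<mu>. conv h f \<mu> + conv h g \<mu>)"
  unfolding convolution_def by (simp add: distrib_left scale_right_distrib sum.distrib)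

lemma conv_diff_left: "conv (\<lambda>\<tau>. f \<tau> - g \<tau>) h = (\<lambda>\<mu>. conv f h \<mu> - conv g h \<mu>)"
  unfolding convolution_def by (simp add: left_diff_distrib scale_right_diff_distrib sum_subtractf)

lemma conv_diff_right: "conv h (\<lambda>\<tau>. f \<tau> - g \<tau>) = (\<lambda>\<mu>. conv h f \<mu> - conv h g \<mu>)"
  unfolding convolution_def by (simp add: right_diff_distrib scale_right_diff_distrib sum_subtractf)

lemma conv_scaleK_left: "conv (\<lambda>\<tau>. scaleK a (f \<tau>)) h = (\<lambda>\<mu>. scaleK a (conv f h \<mu>))"
  unfolding convolution_def by (simp add: scaleK_mult_left[symmetric] scale_sum_right mult.commute[of _ a])

lemma conv_scaleK_right: "conv h (\<lambda>\<tau>. scaleK a (f \<tau>)) = (\<lambda>\<mu>. scaleK a (conv h f \<mu>))"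
  unfolding convolution_def by (simp add: scaleK_mult_right[symmetric] scale_sum_right mult.commute[of _ a])

lemma conv_zero_left: "conv (\<lambda>\<tau>. 0) h = (\<lambda>\<mu>. 0)"
  unfolding convolution_def by simp

lemma conv_zero_right: "conv h (\<lambda>\<tau>. 0) = (\<lambda>\<mu>. 0)"
  unfolding convolution_def by simp

lemma conv_sum_list_left: "conv (\<lambda>\<tau>. \<Sum>x\<leftarrow>xs. F x \<tau>) h = (\<lambda>\<mu>. \<Sum>x\<leftarrow>xs. conv (F x) h \<mu>)"
  by (induction xs) (simp_all add: conv_zero_left conv_add_left)

lemma conv_sum_list_right: "conv h (\<lambda>\<tau>. \<Sum>x\<leftarrow>xs. F x \<tau>) = (\<lambda>\<mu>. \<Sum>x\<leftarrow>xs. conv h (F x) \<mu>)"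
  by (induction xs) (simp_all add: conv_zero_right conv_add_right)

lemma sum_scaleK_by_fibres:
  assumes "finite A" "finite T" "h ` A \<subseteq> T"
  shows "(\<Sum>x\<in>A. scaleK (c x) (w (h x))) = (\<Sum>t\<in>T. scaleK (\<Sum>x\<in>A. c x * (if h x = t then 1 else 0)) (w t))"
proof -
  have "scaleK (c x) (w (h x)) = (\<Sum>t\<in>T. scaleK (c x * (if h x = t then 1 else 0)) (w t))" if "x \<in> A" for x
  proof -
    have "(\<Sum>t\<in>T. scaleK (c x * (if h x = t then 1 else 0)) (w t)) = (\<Sum>t\<in>T. if h x = t then scaleK (c x) (w t) else 0)"
      by (rule sum.cong) auto
    also have "\<dots> = scaleK (c x) (w (h x))"
      using assms that by auto
    finally show ?thesis
      by simp
  qed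
  then have "(\<Sum>x\<in>A. scaleK (c x) (w (h x))) = (\<Sum>x\<in>A. \<Sum>t\<in>T. scaleK (c x * (if h x = t then 1 else 0)) (w t))"
    by (rule sum.cong[OF refl])
  also have "\<dots> = (\<Sum>t\<in>T. scaleK (\<Sum>x\<in>A. c x * (if h x = t then 1 else 0)) (w t))"
    by (simp add: sum.swap[of _ A] scale_sum_left)
  finally show ?thesis .
qed

lemma sum_sum_scaleK_by_fibres:
  assumes "finite A" "\<And>x. x \<in> A \<Longrightarrow> finite (B x)" "finite T"
    and "\<And>x y. x \<in> A \<Longrightarrow> y \<in> B x \<Longrightarrow> h x y \<in> T"
  shows "(\<Sum>x\<in>A. \<Sum>y\<in>B x. scaleK (c x y) (w (h x y))) =
    (\<Sum>t\<in>T. scaleK (\<Sum>x\<in>A. \<Sum>y\<in>B x. c x y * (if h x y = t then 1 else 0)) (w t))"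
proof -
  have "(\<Sum>x\<in>A. \<Sum>y\<in>B x. scaleK (c x y) (w (h x y))) =
      (\<Sum>x\<in>A. \<Sum>t\<in>T. scaleK (\<Sum>y\<in>B x. c x y * (if h x y = t then 1 else 0)) (w t))"
    using assms by (intro sum.cong[OF refl] sum_scaleK_by_fibres) auto
  also have "\<dots> = (\<Sum>t\<in>T. scaleK (\<Sum>x\<in>A. \<Sum>y\<in>B x. c x y * (if h x y = t then 1 else 0)) (w t))"
    by (simp add: sum.swap[of _ A] scale_sum_left)
  finally show ?thesis .
qed

lemma conv_unit_left:
  assumes counit: "\<And>\<mu> \<nu>. (\<Sum>p\<in>supp (\<Delta> \<mu>). \<Delta> \<mu> p * \<epsilon> (fst p) * (if snd p = \<nu> then 1 else 0)) =
    (if \<mu> = \<nu> then 1 else 0)"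
  shows "conv (conv_unit \<epsilon> scaleK) \<phi> = \<phi>"
proof
  fix \<mu>
  let ?N = "insert \<mu> (snd ` supp (\<Delta> \<mu>))"
  have "conv (conv_unit \<epsilon> scaleK) \<phi> \<mu> = (\<Sum>p\<in>supp (\<Delta> \<mu>). scaleK (\<Delta> \<mu> p * \<epsilon> (fst p)) (\<phi> (snd p)))"
    unfolding convolution_def conv_unit_def by (simp add: scaleK_mult_left[symmetric])
  also have "\<dots> = (\<Sum>\<nu>\<in>?N. scaleK (\<Sum>p\<in>supp (\<Delta> \<mu>). \<Delta> \<mu> p * \<epsilon> (fst p) * (if snd p = \<nu> then 1 else 0)) (\<phi> \<nu>))"
    by (rule sum_scaleK_by_fibres[where h = snd and w = \<phi>]) (auto simp: finite_supp_coproduct)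
  also have "\<dots> = (\<Sum>\<nu>\<in>?N. scaleK (if \<mu> = \<nu> then 1 else 0) (\<phi> \<nu>))"
    by (simp only: counit)
  also have "\<dots> = \<phi> \<mu>"
    by (simp add: finite_supp_coproduct if_distrib[of "\<lambda>a. scaleK a _"] cong: if_cong)
  finally show "conv (conv_unit \<epsilon> scaleK) \<phi> \<mu> = \<phi> \<mu>" .
qed

lemma conv_unit_right:
  assumes counit: "\<And>\<mu> \<nu>. (\<Sum>p\<in>supp (\<Delta> \<mu>). \<Delta> \<mu> p * (if fst p = \<nu> then 1 else 0) * \<epsilon> (snd p)) =
    (if \<mu> = \<nu> then 1 else 0)"
  shows "conv \<phi> (conv_unit \<epsilon> scaleK) = \<phi>"
proof
  fix \<mu>
  let ?N = "insert \<mu> (fst ` supp (\<Delta> \<mu>))"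
  have "conv \<phi> (conv_unit \<epsilon> scaleK) \<mu> = (\<Sum>p\<in>supp (\<Delta> \<mu>). scaleK (\<Delta> \<mu> p * \<epsilon> (snd p)) (\<phi> (fst p)))"
    unfolding convolution_def conv_unit_def by (simp add: scaleK_mult_right[symmetric])
  also have "\<dots> = (\<Sum>\<nu>\<in>?N. scaleK (\<Sum>p\<in>supp (\<Delta> \<mu>). \<Delta> \<mu> p * \<epsilon> (snd p) * (if fst p = \<nu> then 1 else 0)) (\<phi> \<nu>))"
    by (rule sum_scaleK_by_fibres[where h = fst and w = \<phi>]) (auto simp: finite_supp_coproduct)
  also have "\<dots> = (\<Sum>\<nu>\<in>?N. scaleK (if \<mu> = \<nu> then 1 else 0) (\<phi> \<nu>))"
    using counit by (simp only: ac_simps)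
  also have "\<dots> = \<phi> \<mu>"
    by (simp add: finite_supp_coproduct if_distrib[of "\<lambda>a. scaleK a _"] cong: if_cong)
  finally show "conv \<phi> (conv_unit \<epsilon> scaleK) \<mu> = \<phi> \<mu>" .
qed


lemma conv_assoc:
  assumes coassoc: "\<And>\<mu> a b c.
    (\<Sum>p\<in>supp (\<Delta> \<mu>). \<Delta> \<mu> p * (if snd p = c then \<Delta> (fst p) (a, b) else 0)) =
    (\<Sum>p\<in>supp (\<Delta> \<mu>). \<Delta> \<mu> p * (if fst p = a then \<Delta> (snd p) (b, c) else 0))"
  shows "conv (conv \<phi> \<psi>) \<rho> = conv \<phi> (conv \<psi> \<rho>)"
proof
  fix \<mu>
  define P where "P = supp (\<Delta> \<mu>)"
  define w where "w t = \<phi> (fst t) * \<psi> (fst (snd t)) * \<rho> (snd (snd t))" for t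
  define T where "T = (\<lambda>(p, r). (fst r, snd r, snd p)) ` (SIGMA p:P. supp (\<Delta> (fst p))) \<union>
    (\<lambda>(p, r). (fst p, fst r, snd r)) ` (SIGMA p:P. supp (\<Delta> (snd p)))"
  have P: "finite P" and T: "finite T"
    unfolding P_def T_def by (simp_all add: finite_supp_coproduct)
  have indicator_sum: "(\<Sum>r\<in>supp (\<Delta> \<nu>). \<Delta> \<mu> p * \<Delta> \<nu> r * (if r = x then 1 else 0)) = \<Delta> \<mu> p * \<Delta> \<nu> x"
    for p \<nu> x
    using sum_supp_times_indicator[OF finite_supp_coproduct, of \<nu> x]
    by (simp add: sum_distrib_left[symmetric] mult.assoc)
  have coeff_left: "(\<Sum>r\<in>supp (\<Delta> (fst p)). \<Delta> \<mu> p * \<Delta> (fst p) r * (if (fst r, snd r, snd p) = (a, b, c) then 1 else 0))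
      = \<Delta> \<mu> p * (if snd p = c then \<Delta> (fst p) (a, b) else 0)" for p a b c
    using indicator_sum[of p "fst p" "(a, b)"] by (cases "snd p = c") (auto simp: prod_eq_iff)
  have coeff_right: "(\<Sum>r\<in>supp (\<Delta> (snd p)). \<Delta> \<mu> p * \<Delta> (snd p) r * (if (fst p, fst r, snd r) = (a, b, c) then 1 else 0))
      = \<Delta> \<mu> p * (if fst p = a then \<Delta> (snd p) (b, c) else 0)" for p a b c
    using indicator_sum[of p "snd p" "(b, c)"] by (cases "fst p = a") (auto simp: prod_eq_iff)
  have "conv (conv \<phi> \<psi>) \<rho> \<mu> =
      (\<Sum>p\<in>P. \<Sum>r\<in>supp (\<Delta> (fst p)). scaleK (\<Delta> \<mu> p * \<Delta> (fst p) r) (w (fst r, snd r, snd p)))"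
    unfolding convolution_def P_def w_def
    by (simp add: sum_distrib_right scaleK_mult_left[symmetric] scale_sum_right)
  also have "\<dots> = (\<Sum>t\<in>T. scaleK (\<Sum>p\<in>P. \<Sum>r\<in>supp (\<Delta> (fst p)).
      \<Delta> \<mu> p * \<Delta> (fst p) r * (if (fst r, snd r, snd p) = t then 1 else 0)) (w t))"
    by (rule sum_sum_scaleK_by_fibres[OF P finite_supp_coproduct T]) (auto simp: T_def)
  also have "\<dots> = (\<Sum>t\<in>T. scaleK (\<Sum>p\<in>P. \<Sum>r\<in>supp (\<Delta> (snd p)).
      \<Delta> \<mu> p * \<Delta> (snd p) r * (if (fst p, fst r, snd r) = t then 1 else 0)) (w t))"
    by (intro sum.cong refl) (simp only: split_paired_all coeff_left coeff_right P_def coassoc)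
  also have "\<dots> = (\<Sum>p\<in>P. \<Sum>r\<in>supp (\<Delta> (snd p)). scaleK (\<Delta> \<mu> p * \<Delta> (snd p) r) (w (fst p, fst r, snd r)))"
    by (rule sum_sum_scaleK_by_fibres[symmetric, OF P finite_supp_coproduct T]) (auto simp: T_def)
  also have "\<dots> = conv \<phi> (conv \<psi> \<rho>) \<mu>"
    unfolding convolution_def P_def w_def
    by (simp add: sum_distrib_left scaleK_mult_right[symmetric] scale_sum_right mult.assoc)
  finally show "conv (conv \<phi> \<psi>) \<rho> \<mu> = conv \<phi> (conv \<psi> \<rho>) \<mu>" .
qed

end

section \<open>Continuity of the convolution\<close>

locale controlled_convolution = hopf_convolution scaleK \<Delta> + controlled_maps scaleK \<omega> deg
  for scaleK :: "'k::real_normed_field \<Rightarrow> 'b::{banach,real_normed_algebra_1,comm_ring_1} \<Rightarrow> 'b"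
    and \<Delta> :: "'m \<Rightarrow> 'm \<times> 'm \<Rightarrow> 'k"
    and \<omega> :: "nat \<Rightarrow> nat \<Rightarrow> nat"
    and deg :: "'m \<Rightarrow> nat" +
  assumes coproduct_continuous: "extends_continuously \<omega> deg (\<lambda>p. deg (fst p) + deg (snd p)) \<Delta>"
begin

lemma norm_conv_le:
  assumes \<phi>: "\<phi> \<in> linf \<omega> deg k" and \<psi>: "\<psi> \<in> linf \<omega> deg k"
  shows "norm (conv \<phi> \<psi> \<mu>) \<le>
    wnorm k \<phi> * wnorm k \<psi> * (\<Sum>p\<in>supp (\<Delta> \<mu>). norm (\<Delta> \<mu> p) * real (\<omega> k (deg (fst p) + deg (snd p))))"
proof -
  have "norm (\<phi> (fst p) * \<psi> (snd p)) \<le> wnorm k \<phi> * wnorm k \<psi> * real (\<omega> k (deg (fst p) + deg (snd p)))" for p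
  proof -
    have "norm (\<phi> (fst p) * \<psi> (snd p)) \<le> norm (\<phi> (fst p)) * norm (\<psi> (snd p))"
      by (rule norm_mult_ineq)
    also have "\<dots> \<le> (wnorm k \<phi> * real (\<omega> k (deg (fst p)))) * (wnorm k \<psi> * real (\<omega> k (deg (snd p))))"
      using linf_norm_bound[OF \<phi>] linf_norm_bound[OF \<psi>] linf_norm_nonneg[OF \<phi>] linf_norm_nonneg[OF \<psi>]
      by (intro mult_mono) auto
    also have "\<dots> = wnorm k \<phi> * wnorm k \<psi> * (real (\<omega> k (deg (fst p))) * real (\<omega> k (deg (snd p))))"
      by (simp add: ac_simps)
    also have "\<dots> \<le> wnorm k \<phi> * wnorm k \<psi> * real (\<omega> k (deg (fst p) + deg (snd p)))"
    proof (rule mult_left_mono)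
      show "real (\<omega> k (deg (fst p))) * real (\<omega> k (deg (snd p))) \<le> real (\<omega> k (deg (fst p) + deg (snd p)))"
        using weight_submult by (metis of_nat_le_iff of_nat_mult)
      show "0 \<le> wnorm k \<phi> * wnorm k \<psi>"
        using linf_norm_nonneg[OF \<phi>] linf_norm_nonneg[OF \<psi>] by simp
    qed
    finally show ?thesis .
  qed
  then have "norm (conv \<phi> \<psi> \<mu>) \<le> (\<Sum>p\<in>supp (\<Delta> \<mu>). norm (\<Delta> \<mu> p) *
      (wnorm k \<phi> * wnorm k \<psi> * real (\<omega> k (deg (fst p) + deg (snd p)))))"
    unfolding convolution_def
    by (intro order_trans[OF norm_sum] sum_mono) (simp add: norm_scaleK mult_left_mono)
  then show ?thesis
    by (simp add: sum_distrib_left algebra_simps)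
qed

lemma conv_linf:
  obtains K C where "\<And>k. 0 \<le> C k"
    "\<And>k \<phi> \<psi>. \<phi> \<in> linf \<omega> deg k \<Longrightarrow> \<psi> \<in> linf \<omega> deg k \<Longrightarrow>
      conv \<phi> \<psi> \<in> linf \<omega> deg (K k) \<and> wnorm (K k) (conv \<phi> \<psi>) \<le> C k * (wnorm k \<phi> * wnorm k \<psi>)"
proof -
  obtain K C where C: "\<And>k. 0 \<le> C k" and bound: "\<And>k \<mu>.
      (\<Sum>p\<in>supp (\<Delta> \<mu>). norm (\<Delta> \<mu> p) * real (\<omega> k (deg (fst p) + deg (snd p)))) \<le> C k * real (\<omega> (K k) (deg \<mu>))"
    by (rule extends_continuously_basis_bound[OF coproduct_continuous finite_supp_coproduct]) blast
  have "conv \<phi> \<psi> \<in> linf \<omega> deg (K k) \<and> wnorm (K k) (conv \<phi> \<psi>) \<le> C k * (wnorm k \<phi> * wnorm k \<psi>)"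
    if \<phi>: "\<phi> \<in> linf \<omega> deg k" and \<psi>: "\<psi> \<in> linf \<omega> deg k" for k \<phi> \<psi>
  proof (rule linf_boundI)
    fix \<mu>
    have "0 \<le> wnorm k \<phi> * wnorm k \<psi>"
      using linf_norm_nonneg[OF \<phi>] linf_norm_nonneg[OF \<psi>] by simp
    then show "norm (conv \<phi> \<psi> \<mu>) \<le> C k * (wnorm k \<phi> * wnorm k \<psi>) * real (\<omega> (K k) (deg \<mu>))"
      using order_trans[OF norm_conv_le[OF \<phi> \<psi>] mult_left_mono[OF bound]]
      by (simp add: algebra_simps)
  qed
  with C that show thesis
    by blast
qed

lemma controlled_conv:
  assumes "\<phi> \<in> controlled" "\<psi> \<in> controlled"
  shows "conv \<phi> \<psi> \<in> controlled"
proof -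
  obtain K C where "\<And>k \<phi> \<psi>. \<phi> \<in> linf \<omega> deg k \<Longrightarrow> \<psi> \<in> linf \<omega> deg k \<Longrightarrow> conv \<phi> \<psi> \<in> linf \<omega> deg (K k)"
    using conv_linf by metis
  moreover obtain k where "\<phi> \<in> linf \<omega> deg k" "\<psi> \<in> linf \<omega> deg k"
    using controlled_common_step[OF assms] .
  ultimately show ?thesis
    using controlled_iff by blast
qed

lemma conv_seminorm_step_bound:
  assumes q: "cont_seminorm q"
  obtains A where "\<And>k. 0 \<le> A k"
    "\<And>k \<Phi> \<Psi>. \<Phi> \<in> linf \<omega> deg k \<Longrightarrow> \<Psi> \<in> linf \<omega> deg k \<Longrightarrow> q (conv \<Phi> \<Psi>) \<le> A k * (wnorm k \<Phi> * wnorm k \<Psi>)"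
proof -
  obtain K C where C: "\<And>k. 0 \<le> C k" and KC: "\<And>k \<phi> \<psi>. \<phi> \<in> linf \<omega> deg k \<Longrightarrow> \<psi> \<in> linf \<omega> deg k \<Longrightarrow>
      conv \<phi> \<psi> \<in> linf \<omega> deg (K k) \<and> wnorm (K k) (conv \<phi> \<psi>) \<le> C k * (wnorm k \<phi> * wnorm k \<psi>)"
    by (rule conv_linf) blast
  obtain c where c: "\<And>k. 0 \<le> c k" "\<And>k f. f \<in> linf \<omega> deg k \<Longrightarrow> q f \<le> c k * wnorm k f"
    by (rule seminorm_nonneg_step_bound[OF q]) blast
  have "q (conv \<Phi> \<Psi>) \<le> (c (K k) * C k) * (wnorm k \<Phi> * wnorm k \<Psi>)"
    if "\<Phi> \<in> linf \<omega> deg k" "\<Psi> \<in> linf \<omega> deg k" for k \<Phi> \<Psi>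
  proof -
    have "q (conv \<Phi> \<Psi>) \<le> c (K k) * wnorm (K k) (conv \<Phi> \<Psi>)"
      using c(2) KC[OF that] by blast
    also have "\<dots> \<le> c (K k) * (C k * (wnorm k \<Phi> * wnorm k \<Psi>))"
      using KC[OF that] c(1) by (intro mult_left_mono) auto
    finally show ?thesis
      by (simp add: mult.assoc)
  qed
  with C c(1) that[of "\<lambda>k. c (K k) * C k"] show thesis
    by simp
qed

lemma conv_seminorm_weighted_bound:
  assumes q: "cont_seminorm q"
  obtains r where "\<And>k. 0 < r k"
    "\<And>i l \<Phi> \<Psi>. \<Phi> \<in> linf \<omega> deg i \<Longrightarrow> \<Psi> \<in> linf \<omega> deg l \<Longrightarrow>
      q (conv \<Phi> \<Psi>) \<le> (wnorm i \<Phi> / r i) * (wnorm l \<Psi> / r l)"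
proof -
  obtain A where A: "\<And>k. 0 \<le> A k" and bound: "\<And>k \<Phi> \<Psi>. \<Phi> \<in> linf \<omega> deg k \<Longrightarrow> \<Psi> \<in> linf \<omega> deg k \<Longrightarrow>
      q (conv \<Phi> \<Psi>) \<le> A k * (wnorm k \<Phi> * wnorm k \<Psi>)"
    by (rule conv_seminorm_step_bound[OF q]) blast
  \<comment> \<open>The weights absorb the constants: on the common step \<open>max i l\<close> we have
    \<open>r i * r l \<le> r (max i l) \<le> 1 / A (max i l)\<close>.\<close>
  define r where "r k = 1 / (A k + 1)" for k
  have r: "0 < r k" "r k \<le> 1" "A k * r k \<le> 1" for k
    using A[of k] by (auto simp: r_def field_simps)
  have "q (conv \<Phi> \<Psi>) \<le> (wnorm i \<Phi> / r i) * (wnorm l \<Psi> / r l)"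
    if \<Phi>: "\<Phi> \<in> linf \<omega> deg i" and \<Psi>: "\<Psi> \<in> linf \<omega> deg l" for i l \<Phi> \<Psi>
  proof -
    define j where "j = max i l"
    have \<Phi>j: "\<Phi> \<in> linf \<omega> deg j" "wnorm j \<Phi> \<le> wnorm i \<Phi>" and \<Psi>j: "\<Psi> \<in> linf \<omega> deg j" "wnorm j \<Psi> \<le> wnorm l \<Psi>"
      using linf_mono[OF \<Phi>, of j] linf_mono[OF \<Psi>, of j] by (auto simp: j_def)
    define x y where "x = wnorm i \<Phi>" and "y = wnorm l \<Psi>"
    have xy: "0 \<le> x" "0 \<le> y"
      using linf_norm_nonneg \<Phi> \<Psi> by (auto simp: x_def y_def)
    have "r i * r l \<le> r j"
      using r[of i] r[of l] by (cases "i \<le> l") (auto simp: j_def max_def mult_left_le mult_le_one mult_right_le_one_le)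
    have "q (conv \<Phi> \<Psi>) \<le> A j * (wnorm j \<Phi> * wnorm j \<Psi>)"
      by (rule bound[OF \<Phi>j(1) \<Psi>j(1)])
    also have "\<dots> \<le> A j * (x * y)"
      using \<Phi>j \<Psi>j A[of j] linf_norm_nonneg[OF \<Phi>j(1)] linf_norm_nonneg[OF \<Psi>j(1)]
      by (auto simp: x_def y_def intro!: mult_left_mono mult_mono)
    also have "\<dots> = x * y * (A j * r j) / r j"
      using r[of j] by simp
    also have "\<dots> \<le> x * y / r j"
      using r[of j] xy by (intro divide_right_mono mult_left_le) auto
    also have "\<dots> \<le> x * y / (r i * r l)"
      using \<open>r i * r l \<le> r j\<close> r[of i] r[of l] r[of j] xy by (intro divide_left_mono) auto
    finally show ?thesis
      by (simp add: x_def y_def)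
  qed
  with r(1) that show thesis
    by blast
qed

lemma seminorm_conv_le_decomp_costs:
  assumes q: "cont_seminorm q"
    and step: "\<And>i l \<Phi> \<Psi>. \<Phi> \<in> linf \<omega> deg i \<Longrightarrow> \<Psi> \<in> linf \<omega> deg l \<Longrightarrow>
      q (conv \<Phi> \<Psi>) \<le> (wnorm i \<Phi> / r i) * (wnorm l \<Psi> / r l)"
    and v1: "v1 \<in> decomp_costs r \<phi>" and v2: "v2 \<in> decomp_costs r \<psi>"
  shows "q (conv \<phi> \<psi>) \<le> v1 * v2"
proof -
  obtain ds1 where ds1: "v1 = (\<Sum>d\<leftarrow>ds1. wnorm (fst d) (snd d) / r (fst d))"
    "\<forall>d\<in>set ds1. snd d \<in> linf \<omega> deg (fst d)" "\<phi> = (\<lambda>\<tau>. \<Sum>d\<leftarrow>ds1. snd d \<tau>)"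
    using v1 unfolding decomp_costs_def by blast
  obtain ds2 where ds2: "v2 = (\<Sum>e\<leftarrow>ds2. wnorm (fst e) (snd e) / r (fst e))"
    "\<forall>e\<in>set ds2. snd e \<in> linf \<omega> deg (fst e)" "\<psi> = (\<lambda>\<tau>. \<Sum>e\<leftarrow>ds2. snd e \<tau>)"
    using v2 unfolding decomp_costs_def by blast
  have pieces: "conv (snd d) (snd e) \<in> controlled" if "d \<in> set ds1" "e \<in> set ds2" for d e
    using ds1(2) ds2(2) that controlled_iff by (blast intro: controlled_conv)
  have "q (conv \<phi> \<psi>) = q (\<lambda>\<mu>. \<Sum>d\<leftarrow>ds1. (\<lambda>\<mu>. \<Sum>e\<leftarrow>ds2. conv (snd d) (snd e) \<mu>) \<mu>)"
    by (simp add: ds1(3) ds2(3) conv_sum_list_left conv_sum_list_right)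
  also have "\<dots> \<le> (\<Sum>d\<leftarrow>ds1. q (\<lambda>\<mu>. \<Sum>e\<leftarrow>ds2. conv (snd d) (snd e) \<mu>))"
    using pieces by (intro seminorm_sum_list[OF q] controlled_sum_list)
  also have "\<dots> \<le> (\<Sum>d\<leftarrow>ds1. \<Sum>e\<leftarrow>ds2. q (conv (snd d) (snd e)))"
    using pieces by (intro sum_list_mono seminorm_sum_list[OF q])
  also have "\<dots> \<le> (\<Sum>d\<leftarrow>ds1. \<Sum>e\<leftarrow>ds2. (wnorm (fst d) (snd d) / r (fst d)) * (wnorm (fst e) (snd e) / r (fst e)))"
    using ds1(2) ds2(2) by (intro sum_list_mono step) auto
  also have "\<dots> = v1 * v2"
    by (simp only: ds1(1) ds2(1) sum_list_const_mult sum_list_mult_const)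
  finally show ?thesis .
qed

lemma seminorm_conv_le_decomp_seminorm:
  assumes q: "cont_seminorm q" and r: "\<And>k. 0 < r k"
    and step: "\<And>i l \<Phi> \<Psi>. \<Phi> \<in> linf \<omega> deg i \<Longrightarrow> \<Psi> \<in> linf \<omega> deg l \<Longrightarrow>
      q (conv \<Phi> \<Psi>) \<le> (wnorm i \<Phi> / r i) * (wnorm l \<Psi> / r l)"
    and \<phi>: "\<phi> \<in> controlled" and \<psi>: "\<psi> \<in> controlled"
  shows "q (conv \<phi> \<psi>) \<le> decomp_seminorm r \<phi> * decomp_seminorm r \<psi>"
proof -
  have "q (conv \<phi> \<psi>) \<le> decomp_seminorm r \<phi> * v2" if v2: "v2 \<in> decomp_costs r \<psi>" for v2
  proof -
    have "q (conv \<phi> \<psi>) \<le> v2 * decomp_seminorm r \<phi>"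
    proof (rule decomp_seminorm_greatest[OF r \<phi> decomp_costs_nonneg[OF r v2]])
      fix v1 assume v1: "v1 \<in> decomp_costs r \<phi>"
      have "q (conv \<phi> \<psi>) \<le> v1 * v2"
        by (rule seminorm_conv_le_decomp_costs[OF q step v1 v2])
      then show "q (conv \<phi> \<psi>) \<le> v2 * v1"
        by (simp only: mult.commute)
    qed
    then show ?thesis
      by (simp only: mult.commute)
  qed
  then show ?thesis
    by (rule decomp_seminorm_greatest[OF r \<psi> decomp_seminorm_nonneg[OF r \<phi>]])
qed

lemma conv_seminorm_bound:
  assumes q: "cont_seminorm q"
  shows "\<exists>p. cont_seminorm p \<and> (\<forall>\<phi>\<in>controlled. \<forall>\<psi>\<in>controlled. q (conv \<phi> \<psi>) \<le> p \<phi> * p \<psi>)"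
proof -
  obtain r where r: "\<And>k. 0 < r k" and step: "\<And>i l \<Phi> \<Psi>. \<Phi> \<in> linf \<omega> deg i \<Longrightarrow> \<Psi> \<in> linf \<omega> deg l \<Longrightarrow>
      q (conv \<Phi> \<Psi>) \<le> (wnorm i \<Phi> / r i) * (wnorm l \<Psi> / r l)"
    by (rule conv_seminorm_weighted_bound[OF q]) blast
  show ?thesis
    by (intro exI[of _ "decomp_seminorm r"] conjI ballI cont_seminorm_decomp_seminorm[OF r]
        seminorm_conv_le_decomp_seminorm[OF q r step])
qed

lemma continuous_map_LB_conv: "continuous_map (prod_topology LB LB) LB (\<lambda>(\<phi>, \<psi>). conv \<phi> \<psi>)"
proof (rule continuous_map_LBI)
  fix x assume "x \<in> topspace (prod_topology LB LB)"
  then obtain \<phi>0 \<psi>0 where x: "x = (\<phi>0, \<psi>0)" "\<phi>0 \<in> controlled" "\<psi>0 \<in> controlled"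
    by (auto simp: topspace_LB)
  then show "(case x of (\<phi>, \<psi>) \<Rightarrow> conv \<phi> \<psi>) \<in> controlled"
    using controlled_conv by simp
  fix q and e :: real assume q: "cont_seminorm q" and "0 < e"
  obtain p where p: "cont_seminorm p" "\<And>\<phi> \<psi>. \<phi> \<in> controlled \<Longrightarrow> \<psi> \<in> controlled \<Longrightarrow> q (conv \<phi> \<psi>) \<le> p \<phi> * p \<psi>"
    using conv_seminorm_bound[OF q] by blast
  obtain \<delta> where "0 < \<delta>" and \<delta>: "\<And>x y. 0 \<le> x \<Longrightarrow> 0 \<le> y \<Longrightarrow> x < \<delta> \<Longrightarrow> y < \<delta> \<Longrightarrow>
      x * p \<psi>0 + p \<phi>0 * y + x * y < e"
    using small_product_perturbation[of "p \<phi>0" "p \<psi>0" e] seminorm_nonneg[OF p(1)] x \<open>0 < e\<close>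
    by auto
  let ?V = "seminorm_ball p \<phi>0 \<delta> \<times> seminorm_ball p \<psi>0 \<delta>"
  have "q (\<lambda>\<tau>. conv \<phi> \<psi> \<tau> - conv \<phi>0 \<psi>0 \<tau>) < e" if "(\<phi>, \<psi>) \<in> ?V" for \<phi> \<psi>
  proof -
    define d1 d2 where "d1 = (\<lambda>\<tau>. \<phi> \<tau> - \<phi>0 \<tau>)" and "d2 = (\<lambda>\<tau>. \<psi> \<tau> - \<psi>0 \<tau>)"
    have d: "d1 \<in> controlled" "d2 \<in> controlled" "p d1 < \<delta>" "p d2 < \<delta>"
      using that x controlled_diff by (auto simp: d1_def d2_def seminorm_ball_def)
    have "(\<lambda>\<tau>. conv \<phi> \<psi> \<tau> - conv \<phi>0 \<psi>0 \<tau>) = (\<lambda>\<tau>. conv d1 \<psi>0 \<tau> + (conv \<phi>0 d2 \<tau> + conv d1 d2 \<tau>))"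
      by (simp add: d1_def d2_def conv_diff_left conv_diff_right algebra_simps)
    then have "q (\<lambda>\<tau>. conv \<phi> \<psi> \<tau> - conv \<phi>0 \<psi>0 \<tau>) \<le> q (conv d1 \<psi>0) + q (conv \<phi>0 d2) + q (conv d1 d2)"
      using seminorm_triangle3[OF q] controlled_conv x d by simp
    also have "\<dots> \<le> p d1 * p \<psi>0 + p \<phi>0 * p d2 + p d1 * p d2"
      using p(2) x d by (intro add_mono) auto
    also have "\<dots> < e"
      using \<delta> d seminorm_nonneg[OF p(1)] by simp
    finally show ?thesis .
  qed
  moreover have "openin (prod_topology LB LB) ?V"
    using openin_seminorm_ball[OF p(1)] x by (simp add: openin_prod_Times_iff)
  moreover have "x \<in> ?V"
    using center_in_seminorm_ball[OF p(1)] x \<open>0 < \<delta>\<close> by simp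
  ultimately show "\<exists>V. openin (prod_topology LB LB) V \<and> x \<in> V \<and>
      (\<forall>y\<in>V. q (\<lambda>\<tau>. (case y of (\<phi>, \<psi>) \<Rightarrow> conv \<phi> \<psi>) \<tau> - (case x of (\<phi>, \<psi>) \<Rightarrow> conv \<phi> \<psi>) \<tau>) < e)"
    using x by (intro exI[of _ ?V]) auto
qed

end

theorem proposition3p9:
  fixes scaleK :: "'k::real_normed_field \<Rightarrow> 'b::{banach,real_normed_algebra_1,comm_ring_1} \<Rightarrow> 'b"
    and \<omega> :: "nat \<Rightarrow> nat \<Rightarrow> nat"
    and \<Sigma> :: "'m::monoid_mult set"
    and deg :: "'m \<Rightarrow> nat"
    and \<Delta> :: "'m \<Rightarrow> 'm \<times> 'm \<Rightarrow> 'k"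
    and \<epsilon> :: "'m \<Rightarrow> 'k"
    and S :: "'m \<Rightarrow> 'm \<Rightarrow> 'k"
  assumes "is_R_or_C TYPE('k)"
    and "K_banach_algebra scaleK"
    and "convex_growth_family \<omega>"
    and "combinatorial_hopf \<Sigma> deg \<Delta> \<epsilon> S"
    and "control_pair deg \<Delta> S \<omega>"
  defines "L \<equiv> linf_ind \<omega> deg :: ('m \<Rightarrow> 'b) set"
    and "T \<equiv> LB_topology \<omega> deg scaleK"
    and "conv \<equiv> convolution \<Delta> scaleK"
    and "u \<equiv> conv_unit \<epsilon> scaleK"
  shows
    \<comment> \<open>L is a K-vector space, closed under convolution, containing the unit\<close>
    "(\<forall>\<phi>\<in>L. \<forall>\<psi>\<in>L. (\<lambda>\<mu>. \<phi> \<mu> + \<psi> \<mu>) \<in> L) \<and> (\<forall>a. \<forall>\<phi>\<in>L. (\<lambda>\<mu>. scaleK a (\<phi> \<mu>)) \<in> L) \<and>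
     (\<forall>\<phi>\<in>L. \<forall>\<psi>\<in>L. conv \<phi> \<psi> \<in> L) \<and> u \<in> L \<and>
     \<comment> \<open>associative unital K-algebra\<close>
     (\<forall>\<phi>\<in>L. \<forall>\<psi>\<in>L. \<forall>\<rho>\<in>L. conv (conv \<phi> \<psi>) \<rho> = conv \<phi> (conv \<psi> \<rho>)) \<and>
     (\<forall>\<phi>\<in>L. conv u \<phi> = \<phi> \<and> conv \<phi> u = \<phi>) \<and>
     (\<forall>\<phi>\<in>L. \<forall>\<phi>'\<in>L. \<forall>\<psi>\<in>L.
        conv (\<lambda>\<mu>. \<phi> \<mu> + \<phi>' \<mu>) \<psi> = (\<lambda>\<mu>. conv \<phi> \<psi> \<mu> + conv \<phi>' \<psi> \<mu>) \<and>
        conv \<psi> (\<lambda>\<mu>. \<phi> \<mu> + \<phi>' \<mu>) = (\<lambda>\<mu>. conv \<psi> \<phi> \<mu> + conv \<psi> \<phi>' \<mu>)) \<and>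
     (\<forall>a. \<forall>\<phi>\<in>L. \<forall>\<psi>\<in>L.
        conv (\<lambda>\<mu>. scaleK a (\<phi> \<mu>)) \<psi> = (\<lambda>\<mu>. scaleK a (conv \<phi> \<psi> \<mu>)) \<and>
        conv \<psi> (\<lambda>\<mu>. scaleK a (\<phi> \<mu>)) = (\<lambda>\<mu>. scaleK a (conv \<psi> \<phi> \<mu>))) \<and>
     \<comment> \<open>topological algebra w.r.t. the locally convex inductive limit topology on L\<close>
     topspace T = L \<and>
     continuous_map (prod_topology T T) T (\<lambda>(\<phi>, \<psi>). (\<lambda>\<mu>. \<phi> \<mu> + \<psi> \<mu>)) \<and>
     continuous_map (prod_topology (euclidean :: 'k topology) T) T (\<lambda>(a, \<phi>). (\<lambda>\<mu>. scaleK a (\<phi> \<mu>))) \<and>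
     continuous_map (prod_topology T T) T (\<lambda>(\<phi>, \<psi>). conv \<phi> \<psi>)"
proof -
  have hopf: "graded_connected_hopf deg \<Delta> \<epsilon> S"
    using assms(4) by (simp add: combinatorial_hopf_def)
  have "growth_family \<omega>"
    using assms(3) by (simp add: convex_growth_family_def)
  moreover have "extends_continuously \<omega> deg (\<lambda>p. deg (fst p) + deg (snd p)) \<Delta>"
    using assms(5) by (simp add: control_pair_def)
  ultimately interpret controlled_convolution scaleK \<Delta> \<omega> deg
    using assms(2) hopf_finite_supp[OF hopf] by unfold_locales auto
  have "norm (\<epsilon> \<mu>) \<le> 1" for \<mu>
    using hopf_counit_support[OF hopf, of \<mu>] hopf_counit_one[OF hopf] by (cases "\<epsilon> \<mu> = 0") auto
  then have unit: "conv_unit \<epsilon> scaleK \<in> controlled"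
    by (rule conv_unit_controlled)
  show ?thesis
    unfolding L_def T_def conv_def u_def
    by (intro conjI ballI allI;
        (rule unit controlled_add controlled_scaleK controlled_conv
          conv_assoc[OF hopf_coassoc[OF hopf]]
          conv_unit_left[OF hopf_counit_left[OF hopf]] conv_unit_right[OF hopf_counit_right[OF hopf]]
          conv_add_left conv_add_right conv_scaleK_left conv_scaleK_right
          topspace_LB continuous_map_LB_add continuous_map_LB_scaleK continuous_map_LB_conv
        | assumption)+)
qed

end
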